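(* Let ${}^*\mathbb{C}$, ${}^*\mathbb{R}$ be the ultrapowers and $\rho=\langle R_\varphi\rangle$ as in the context. Then: (i) for $(A_\varphi)\in\mathbb{C}^{\mathcal{D}_0}$, $(A_\varphi)\in\mathcal{M}(\mathbb{C}^{\mathcal{D}_0})$ if and only if $\langle A_\varphi\rangle\in\mathcal{M}_\rho({}^*\mathbb{C})$; (ii) the map $\widehat{A_\varphi}\mapsto\widehat{\langle A_\varphi\rangle}$ is a well-defined field isomorphism from $\widehat{\mathbb{C}^{\mathcal{D}_0}}$ onto ${}^\rho\mathbb{C}$, restricting to an isomorphism of $\widehat{\mathbb{R}^{\mathcal{D}_0}}$ onto ${}^\rho\mathbb{R}$, and it preserves the valuation, the ultra-norm and the ultra-metric; (iii) the order topology and the metric topology on $\widehat{\mathbb{C}^{\mathcal{D}_0}}$ coincide.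
   Context: Fix $\mathcal{D}_0=\mathcal{D}(\mathbb{R}^d)$. For $\varphi\in\mathcal{D}_0$ let $R_\varphi=\sup\{\|x\|:\varphi(x)\neq0\}$ if $\varphi\neq0$, $R_0=1$. For $n\in\mathbb{N}$, $\mathcal{D}_n$ is the set of $\varphi\in\mathcal{D}_0$ that are real-valued, even, with $R_\varphi\le1/n$, $\int\varphi=1$, $\int x^\alpha\varphi(x)dx=0$ for $1\le|\alpha|\le n$, $\int|\varphi|\le1+1/n$, and $\sup_x|\partial^\alpha\varphi(x)|\le R_\varphi^{-2(|\alpha|+d)}$ for $|\alpha|\le n$. $\mathcal{U}$ is a fixed free ultrafilter on $\mathcal{D}_0$ containing every $\mathcal{D}_n$ and $\mathfrak c^+$-good ($\mathfrak c=\mathrm{card}\,\mathbb{R}$); "$P(\varphi)$ a.e." means $\{\varphi:P(\varphi)\}\in\mathcal{U}$. Asymptotic numbers: $\mathcal{M}(\mathbb{C}^{\mathcal{D}_0})$ = nets with $|A_\varphi|\le R_\varphi^{-m}$ a.e. for some $m\in\mathbb{N}$; $\mathcal{N}(\mathbb{C}^{\mathcal{D}_0})$ = nets with $|A_\varphi|<R_\varphi^p$ a.e. for all $p\in\mathbb{N}$; $\widehat{\mathbb{C}^{\mathcal{D}_0}}=\mathcal{M}/\mathcal{N}$, $\widehat{\mathbb{R}^{\mathcal{D}_0}}$ the classes of real-valued nets, ordered by: nonzero $\widehat{A_\varphi}>0$ iff $A_\varphi>0$ a.e.; $|x+iy|=\sqrt{x^2+y^2}$; $z\approx0$ if $|z|<1/n$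 for all $n$; $\widehat\rho$ = class of $(R_\varphi)$; valuation $v(0)=\infty$, $v(z)=\sup\{q\in\mathbb{Q}: z/\widehat\rho^{\,q}\approx0\}$; ultra-norm $|z|_v=e^{-v(z)}$; ultra-metric $d(a,b)=|a-b|_v$. The order topology on $\widehat{\mathbb{C}^{\mathcal{D}_0}}$ is the product topology from the order topology of $\widehat{\mathbb{R}^{\mathcal{D}_0}}$ under $\widehat{\mathbb{C}^{\mathcal{D}_0}}=\widehat{\mathbb{R}^{\mathcal{D}_0}}+i\widehat{\mathbb{R}^{\mathcal{D}_0}}$; the metric topology is that of $d$. Ultrapower: ${}^*\mathbb{R}=\mathbb{R}^{\mathcal{D}_0}/\!\sim$, where $(A_\varphi)\sim(B_\varphi)$ iff $A_\varphi=B_\varphi$ a.e.; $\langle A_\varphi\rangle$ denotes the class; operations pointwise; $\langle A_\varphi\rangle>0$ iff $A_\varphi>0$ a.e.; similarly ${}^*\mathbb{C}=\mathbb{C}^{\mathcal{D}_0}/\!\sim$ with $|\langle A_\varphi\rangle|=\langle|A_\varphi|\rangle$; $\mathbb{R}\subset{}^*\mathbb{R}$ via constant nets. $\rho=\langle R_\varphi\rangle$ (a positive infinitesimal). Robinson field: $\mathcal{M}_\rho({}^*\mathbb{C})=\{\zeta\in{}^*\mathbb{C}: |\zeta|\le\rho^{-m}\text{ for some } m\in\mathbb{N}\}$, $\mathcal{N}_\rho({}^*\mathbb{C})=\{\zeta: |\zeta|<\rho^n\text{ for all }n\in\mathbb{N}\}$, ${}^\rho\mathbb{C}=\mathcal{M}_\rho/\mathcal{N}_\rho$,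 $\widehat\zeta$ the class; ${}^\rho\mathbb{R}$ the classes of elements of ${}^*\mathbb{R}$. Valuation on ${}^\rho\mathbb{C}$: $v(0)=\infty$, $v(\widehat\zeta)=\mathrm{st}(\ln|\zeta|/\ln\rho)$ for $\widehat\zeta\neq0$, where $\ln$ acts componentwise on nets and $\mathrm{st}$ is the standard part (the unique real number infinitely close to a finite element of ${}^*\mathbb{R}$); $|z|_v=e^{-v(z)}$, $d_v(a,b)=|a-b|_v$. *)

theory Defs
  imports "HOL-Analysis.Analysis" "HOL-Algebra.QuotRing"
begin

text \<open>R^d is modelled by a Euclidean space type 'a (d = DIM('a)).
  Multi-indices alpha are represented as lists of basis vectors;
  |alpha| is the length of the list.\<close>

definition pdir :: "'a::euclidean_space \<Rightarrow> ('a \<Rightarrow> complex) \<Rightarrow> 'a \<Rightarrow> complex" where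
  "pdir e g x = vector_derivative (\<lambda>t::real. g (x + t *\<^sub>R e)) (at 0)"

fun pderivs :: "'a::euclidean_space list \<Rightarrow> ('a \<Rightarrow> complex) \<Rightarrow> 'a \<Rightarrow> complex" where
  "pderivs [] f = f"
| "pderivs (e # es) f = pdir e (pderivs es f)"

definition smooth_fn :: "('a::euclidean_space \<Rightarrow> complex) \<Rightarrow> bool" where
  "smooth_fn f \<longleftrightarrow> (\<forall>es. set es \<subseteq> Basis \<longrightarrow>
      continuous_on UNIV (pderivs es f) \<and>
      (\<forall>e\<in>Basis. \<forall>x. ((\<lambda>t::real. pderivs es f (x + t *\<^sub>R e))
                        has_vector_derivative pderivs (e # es) f x) (at 0)))"

definition test_fns :: "('a::euclidean_space \<Rightarrow> complex) set" where
  "test_fns = {\<phi>. smooth_fn \<phi> \<and> compact (closure {x. \<phi> x \<noteq> 0})}"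

definition Rphi :: "('a::euclidean_space \<Rightarrow> complex) \<Rightarrow> real" where
  "Rphi \<phi> = (if \<phi> = (\<lambda>_. 0) then 1 else Sup {norm x | x. \<phi> x \<noteq> 0})"

definition Dn :: "nat \<Rightarrow> ('a::euclidean_space \<Rightarrow> complex) set" where
  "Dn n = {\<phi> \<in> test_fns.
      (\<forall>x. \<phi> x \<in> \<real>) \<and> (\<forall>x. \<phi> (- x) = \<phi> x) \<and>
      Rphi \<phi> \<le> 1 / real n \<and>
      integral UNIV \<phi> = 1 \<and>
      (\<forall>es. set es \<subseteq> Basis \<and> 1 \<le> length es \<and> length es \<le> n \<longrightarrow>
         integral UNIV (\<lambda>x. (\<Prod>e\<leftarrow>es. complex_of_real (x \<bullet> e)) * \<phi> x) = 0) \<and>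
      integral UNIV (\<lambda>x. cmod (\<phi> x)) \<le> 1 + 1 / real n \<and>
      (\<forall>es. set es \<subseteq> Basis \<and> length es \<le> n \<longrightarrow>
         (\<forall>x. cmod (pderivs es \<phi> x) \<le> Rphi \<phi> powr (- real (2 * (length es + DIM('a))))))}"

definition ultrafilter_on :: "'i set \<Rightarrow> 'i set set \<Rightarrow> bool" where
  "ultrafilter_on I U \<longleftrightarrow> U \<subseteq> Pow I \<and> I \<in> U \<and> {} \<notin> U \<and>
     (\<forall>A\<in>U. \<forall>B\<in>U. A \<inter> B \<in> U) \<and>
     (\<forall>A\<in>U. \<forall>B. A \<subseteq> B \<and> B \<subseteq> I \<longrightarrow> B \<in> U) \<and>
     (\<forall>A. A \<subseteq> I \<longrightarrow> A \<in> U \<or> I - A \<in> U)"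

definition free_ultrafilter_on :: "'i set \<Rightarrow> 'i set set \<Rightarrow> bool" where
  "free_ultrafilter_on I U \<longleftrightarrow> ultrafilter_on I U \<and> \<Inter> U = {}"

text \<open>c^+-good (Keisler): for every cardinal lambda < c^+, i.e. lambda \<le> c, realised as a
  subset X of the reals, every anti-monotone f from the finite subsets of X into U has a
  multiplicative refinement g.\<close>
definition cplus_good :: "'i set set \<Rightarrow> bool" where
  "cplus_good U \<longleftrightarrow> (\<forall>(X::real set) f.
     (\<forall>s. finite s \<and> s \<subseteq> X \<longrightarrow> f s \<in> U) \<and>
     (\<forall>s t. finite t \<and> t \<subseteq> X \<and> s \<subseteq> t \<longrightarrow> f t \<subseteq> f s) \<longrightarrow>
     (\<exists>g. (\<forall>s. finite s \<and> s \<subseteq> X \<longrightarrow> g s \<in> U \<and> g s \<subseteq> f s) \<and>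
          (\<forall>s t. finite s \<and> s \<subseteq> X \<and> finite t \<and> t \<subseteq> X \<longrightarrow> g (s \<union> t) = g s \<inter> g t)))"

text \<open>Nets indexed by D_0; only values on D_0 = test_fns matter.\<close>
type_synonym 'a net = "('a \<Rightarrow> complex) \<Rightarrow> complex"

definition ae :: "('a::euclidean_space \<Rightarrow> complex) set set \<Rightarrow> (('a \<Rightarrow> complex) \<Rightarrow> bool) \<Rightarrow> bool" where
  "ae U P \<longleftrightarrow> {\<phi> \<in> test_fns. P \<phi>} \<in> U"

definition realnet :: "'a::euclidean_space net \<Rightarrow> bool" where
  "realnet A \<longleftrightarrow> (\<forall>\<phi>\<in>test_fns. A \<phi> \<in> \<real>)"

definition rep :: "'b set \<Rightarrow> 'b" where
  "rep X = (SOME A. A \<in> X)"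

definition moderate :: "('a::euclidean_space \<Rightarrow> complex) set set \<Rightarrow> 'a net set" where
  "moderate U = {A. \<exists>m::nat. ae U (\<lambda>\<phi>. cmod (A \<phi>) \<le> inverse (Rphi \<phi> ^ m))}"

definition negligible :: "('a::euclidean_space \<Rightarrow> complex) set set \<Rightarrow> 'a net set" where
  "negligible U = {A. \<forall>p::nat. ae U (\<lambda>\<phi>. cmod (A \<phi>) < Rphi \<phi> ^ p)}"

definition asym_cls :: "('a::euclidean_space \<Rightarrow> complex) set set \<Rightarrow> 'a net \<Rightarrow> 'a net set" where
  "asym_cls U A = {B \<in> moderate U. (\<lambda>\<phi>. A \<phi> - B \<phi>) \<in> negligible U}"

definition AsymC :: "('a::euclidean_space \<Rightarrow> complex) set set \<Rightarrow> 'a net set set" where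
  "AsymC U = asym_cls U ` moderate U"

definition AsymR :: "('a::euclidean_space \<Rightarrow> complex) set set \<Rightarrow> 'a net set set" where
  "AsymR U = asym_cls U ` (moderate U \<inter> {A. realnet A})"

definition asym_ring :: "('a::euclidean_space \<Rightarrow> complex) set set \<Rightarrow> 'a net set ring" where
  "asym_ring U = \<lparr>carrier = AsymC U,
     mult = (\<lambda>X Y. asym_cls U (\<lambda>\<phi>. rep X \<phi> * rep Y \<phi>)),
     one = asym_cls U (\<lambda>_. 1),
     zero = asym_cls U (\<lambda>_. 0),
     add = (\<lambda>X Y. asym_cls U (\<lambda>\<phi>. rep X \<phi> + rep Y \<phi>))\<rparr>"

definition asym_minus :: "('a::euclidean_space \<Rightarrow> complex) set set \<Rightarrow> 'a net set \<Rightarrow> 'a net set \<Rightarrow> 'a net set" where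
  "asym_minus U X Y = asym_cls U (\<lambda>\<phi>. rep X \<phi> - rep Y \<phi>)"

definition asym_const :: "('a::euclidean_space \<Rightarrow> complex) set set \<Rightarrow> complex \<Rightarrow> 'a net set" where
  "asym_const U c = asym_cls U (\<lambda>_. c)"

definition asym_pos :: "('a::euclidean_space \<Rightarrow> complex) set set \<Rightarrow> 'a net set \<Rightarrow> bool" where
  "asym_pos U X \<longleftrightarrow> X \<noteq> asym_const U 0 \<and>
     (\<exists>A\<in>X. realnet A \<and> ae U (\<lambda>\<phi>. Re (A \<phi>) > 0))"

definition asym_less :: "('a::euclidean_space \<Rightarrow> complex) set set \<Rightarrow> 'a net set \<Rightarrow> 'a net set \<Rightarrow> bool" where
  "asym_less U X Y \<longleftrightarrow> asym_pos U (asym_minus U Y X)"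

definition asym_abs :: "('a::euclidean_space \<Rightarrow> complex) set set \<Rightarrow> 'a net set \<Rightarrow> 'a net set" where
  "asym_abs U X = asym_cls U (\<lambda>\<phi>. complex_of_real
      (sqrt ((Re (rep X \<phi>))\<^sup>2 + (Im (rep X \<phi>))\<^sup>2)))"

definition asym_re :: "('a::euclidean_space \<Rightarrow> complex) set set \<Rightarrow> 'a net set \<Rightarrow> 'a net set" where
  "asym_re U X = asym_cls U (\<lambda>\<phi>. complex_of_real (Re (rep X \<phi>)))"

definition asym_im :: "('a::euclidean_space \<Rightarrow> complex) set set \<Rightarrow> 'a net set \<Rightarrow> 'a net set" where
  "asym_im U X = asym_cls U (\<lambda>\<phi>. complex_of_real (Im (rep X \<phi>)))"

definition asym_approx0 :: "('a::euclidean_space \<Rightarrow> complex) set set \<Rightarrow> 'a net set \<Rightarrow> bool" where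
  "asym_approx0 U z \<longleftrightarrow> (\<forall>n::nat. n \<ge> 1 \<longrightarrow>
      asym_less U (asym_abs U z) (asym_const U (complex_of_real (1 / real n))))"

text \<open>rho-hat to a rational power q is the class of (R_phi^q); z / rho^q is taken
  representative-wise.\<close>
definition asym_val :: "('a::euclidean_space \<Rightarrow> complex) set set \<Rightarrow> 'a net set \<Rightarrow> ereal" where
  "asym_val U z = (if z = asym_const U 0 then \<infinity> else
      Sup {ereal (real_of_rat q) | q.
             asym_approx0 U (asym_cls U (\<lambda>\<phi>. rep z \<phi> / complex_of_real (Rphi \<phi> powr real_of_rat q)))})"

definition unorm :: "ereal \<Rightarrow> real" where
  "unorm v = (if v = \<infinity> then 0 else exp (- real_of_ereal v))"

definition asym_norm :: "('a::euclidean_space \<Rightarrow> complex) set set \<Rightarrow> 'a net set \<Rightarrow> real" where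
  "asym_norm U z = unorm (asym_val U z)"

definition asym_dist :: "('a::euclidean_space \<Rightarrow> complex) set set \<Rightarrow> 'a net set \<Rightarrow> 'a net set \<Rightarrow> real" where
  "asym_dist U a b = asym_norm U (asym_minus U a b)"

definition ord_top_R :: "('a::euclidean_space \<Rightarrow> complex) set set \<Rightarrow> 'a net set topology" where
  "ord_top_R U = topology_generated_by
     ({{x \<in> AsymR U. asym_less U a x} | a. a \<in> AsymR U} \<union>
      {{x \<in> AsymR U. asym_less U x b} | b. b \<in> AsymR U})"

text \<open>Order topology on the complex asymptotic numbers: the product topology transported
  along C-hat = R-hat + i R-hat, i.e. z corresponds to (Re z, Im z).\<close>
definition ord_top_C :: "('a::euclidean_space \<Rightarrow> complex) set set \<Rightarrow> 'a net set topology" where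
  "ord_top_C U = pullback_topology (AsymC U) (\<lambda>z. (asym_re U z, asym_im U z))
                    (prod_topology (ord_top_R U) (ord_top_R U))"

definition metric_top_C :: "('a::euclidean_space \<Rightarrow> complex) set set \<Rightarrow> 'a net set topology" where
  "metric_top_C U = Metric_space.mtopology (AsymC U) (asym_dist U)"

definition star_cls :: "('a::euclidean_space \<Rightarrow> complex) set set \<Rightarrow> 'a net \<Rightarrow> 'a net set" where
  "star_cls U A = {B. ae U (\<lambda>\<phi>. A \<phi> = B \<phi>)}"

definition StarC :: "('a::euclidean_space \<Rightarrow> complex) set set \<Rightarrow> 'a net set set" where
  "StarC U = range (star_cls U)"

definition StarR :: "('a::euclidean_space \<Rightarrow> complex) set set \<Rightarrow> 'a net set set" where
  "StarR U = star_cls U ` {A. realnet A}"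

definition star_lift1 :: "('a::euclidean_space \<Rightarrow> complex) set set \<Rightarrow> (complex \<Rightarrow> complex) \<Rightarrow> 'a net set \<Rightarrow> 'a net set" where
  "star_lift1 U f X = star_cls U (\<lambda>\<phi>. f (rep X \<phi>))"

definition star_lift2 :: "('a::euclidean_space \<Rightarrow> complex) set set \<Rightarrow> (complex \<Rightarrow> complex \<Rightarrow> complex) \<Rightarrow> 'a net set \<Rightarrow> 'a net set \<Rightarrow> 'a net set" where
  "star_lift2 U f X Y = star_cls U (\<lambda>\<phi>. f (rep X \<phi>) (rep Y \<phi>))"

definition star_const :: "('a::euclidean_space \<Rightarrow> complex) set set \<Rightarrow> complex \<Rightarrow> 'a net set" where
  "star_const U c = star_cls U (\<lambda>_. c)"

definition star_abs :: "('a::euclidean_space \<Rightarrow> complex) set set \<Rightarrow> 'a net set \<Rightarrow> 'a net set" where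
  "star_abs U X = star_lift1 U (\<lambda>z. complex_of_real (cmod z)) X"

definition star_less :: "('a::euclidean_space \<Rightarrow> complex) set set \<Rightarrow> 'a net set \<Rightarrow> 'a net set \<Rightarrow> bool" where
  "star_less U X Y \<longleftrightarrow> ae U (\<lambda>\<phi>. Re (rep X \<phi>) < Re (rep Y \<phi>))"

definition star_le :: "('a::euclidean_space \<Rightarrow> complex) set set \<Rightarrow> 'a net set \<Rightarrow> 'a net set \<Rightarrow> bool" where
  "star_le U X Y \<longleftrightarrow> star_less U X Y \<or> X = Y"

definition star_rho :: "('a::euclidean_space \<Rightarrow> complex) set set \<Rightarrow> 'a net set" where
  "star_rho U = star_cls U (\<lambda>\<phi>. complex_of_real (Rphi \<phi>))"

definition M_rho :: "('a::euclidean_space \<Rightarrow> complex) set set \<Rightarrow> 'a net set set" where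
  "M_rho U = {\<zeta> \<in> StarC U. \<exists>m::nat.
      star_le U (star_abs U \<zeta>) (star_lift1 U inverse (star_lift1 U (\<lambda>z. z ^ m) (star_rho U)))}"

definition N_rho :: "('a::euclidean_space \<Rightarrow> complex) set set \<Rightarrow> 'a net set set" where
  "N_rho U = {\<zeta> \<in> StarC U. \<forall>n::nat.
      star_less U (star_abs U \<zeta>) (star_lift1 U (\<lambda>z. z ^ n) (star_rho U))}"

definition rob_cls :: "('a::euclidean_space \<Rightarrow> complex) set set \<Rightarrow> 'a net set \<Rightarrow> 'a net set set" where
  "rob_cls U \<zeta> = {\<eta> \<in> M_rho U. star_lift2 U (-) \<zeta> \<eta> \<in> N_rho U}"

definition RobC :: "('a::euclidean_space \<Rightarrow> complex) set set \<Rightarrow> 'a net set set set" where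
  "RobC U = rob_cls U ` M_rho U"

definition RobR :: "('a::euclidean_space \<Rightarrow> complex) set set \<Rightarrow> 'a net set set set" where
  "RobR U = rob_cls U ` (M_rho U \<inter> StarR U)"

definition rob_ring :: "('a::euclidean_space \<Rightarrow> complex) set set \<Rightarrow> 'a net set set ring" where
  "rob_ring U = \<lparr>carrier = RobC U,
     mult = (\<lambda>X Y. rob_cls U (star_lift2 U (*) (rep X) (rep Y))),
     one = rob_cls U (star_const U 1),
     zero = rob_cls U (star_const U 0),
     add = (\<lambda>X Y. rob_cls U (star_lift2 U (+) (rep X) (rep Y)))\<rparr>"

definition rob_minus :: "('a::euclidean_space \<Rightarrow> complex) set set \<Rightarrow> 'a net set set \<Rightarrow> 'a net set set \<Rightarrow> 'a net set set" where
  "rob_minus U X Y = rob_cls U (star_lift2 U (-) (rep X) (rep Y))"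

definition star_st :: "('a::euclidean_space \<Rightarrow> complex) set set \<Rightarrow> 'a net set \<Rightarrow> real" where
  "star_st U \<xi> = (THE r::real. \<forall>n::nat. n \<ge> 1 \<longrightarrow>
      star_less U (star_abs U (star_lift2 U (-) \<xi> (star_const U (complex_of_real r))))
                  (star_const U (complex_of_real (1 / real n))))"

definition star_ln :: "('a::euclidean_space \<Rightarrow> complex) set set \<Rightarrow> 'a net set \<Rightarrow> 'a net set" where
  "star_ln U X = star_lift1 U (\<lambda>z. complex_of_real (ln (Re z))) X"

definition rob_val :: "('a::euclidean_space \<Rightarrow> complex) set set \<Rightarrow> 'a net set set \<Rightarrow> ereal" where
  "rob_val U X = (if X = rob_cls U (star_const U 0) then \<infinity> else
      ereal (star_st U (star_lift2 U (/) (star_ln U (star_abs U (rep X))) (star_ln U (star_rho U)))))"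

definition rob_norm :: "('a::euclidean_space \<Rightarrow> complex) set set \<Rightarrow> 'a net set set \<Rightarrow> real" where
  "rob_norm U X = unorm (rob_val U X)"

definition rob_dist :: "('a::euclidean_space \<Rightarrow> complex) set set \<Rightarrow> 'a net set set \<Rightarrow> 'a net set set \<Rightarrow> real" where
  "rob_dist U X Y = rob_norm U (rob_minus U X Y)"

definition Phi :: "('a::euclidean_space \<Rightarrow> complex) set set \<Rightarrow> 'a net set \<Rightarrow> 'a net set set" where
  "Phi U X = rob_cls U (star_cls U (rep X))"

end

theory Submission
  imports Defs
begin

text \<open>All notions on both sides are defined from the same nets \<open>A : \<D>\<^sub>0 \<rightarrow> \<complex>\<close>, and every defining
  condition is an almost-everywhere condition, i.e. an eventuality along the filter of \<open>U\<close>.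
  Hence the class of \<open>\<langle>A\<rangle>\<close> in \<open>\<M>\<^sub>\<rho>/\<N>\<^sub>\<rho>\<close> is the set of ultrapower classes of the nets in
  the asymptotic class of \<open>A\<close>, which makes \<open>\<Phi>\<close> well defined, bijective and a ring homomorphism.
  For \<open>A\<close> not negligible, \<open>ln |A\<^sub>\<phi>| / ln R\<^sub>\<phi>\<close> is bounded and so converges along the
  ultrafilter to some \<open>r\<close>, which is the standard part in the Robinson valuation; on the other side,
  \<open>A / \<rho>\<^sup>q \<approx> 0\<close> holds exactly for \<open>q < r\<close>, so both valuations equal \<open>r\<close>.
  Finally, both topologies have the boxes \<open>{w. |w - z| < \<rho>\<^sup>n a.e.}\<close> as a neighbourhood base:
  the metric ball of radius \<open>e\<^sup>-\<^sup>n\<close> is such a box, and boxes and products of open intervals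
  \<open>(a - \<rho>\<^sup>k, a + \<rho>\<^sup>k)\<close> are nested in each other.\<close>

lemma tendsto_iff_inverse_nat:
  "(f \<longlongrightarrow> (r::real)) F \<longleftrightarrow> (\<forall>n::nat. n \<ge> 1 \<longrightarrow> (\<forall>\<^sub>F x in F. \<bar>f x - r\<bar> < 1 / real n))"
proof
  assume "(f \<longlongrightarrow> r) F"
  then show "\<forall>n::nat. n \<ge> 1 \<longrightarrow> (\<forall>\<^sub>F x in F. \<bar>f x - r\<bar> < 1 / real n)"
    by (auto simp: tendsto_iff dist_real_def)
next
  assume *: "\<forall>n::nat. n \<ge> 1 \<longrightarrow> (\<forall>\<^sub>F x in F. \<bar>f x - r\<bar> < 1 / real n)"
  show "(f \<longlongrightarrow> r) F" unfolding tendsto_iff dist_real_def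
  proof (intro allI impI)
    fix e :: real assume "0 < e"
    then obtain n :: nat where n: "1 / e < real n" using reals_Archimedean2 by blast
    have "0 < real n" using n \<open>0 < e\<close> by (smt (verit) divide_pos_pos)
    then have "n \<ge> 1" "1 / real n < e" using n \<open>0 < e\<close> by (simp_all add: field_simps)
    with * have "\<forall>\<^sub>F x in F. \<bar>f x - r\<bar> < 1 / real n" by blast
    then show "\<forall>\<^sub>F x in F. \<bar>f x - r\<bar> < e"
      by (rule eventually_mono) (use \<open>1 / real n < e\<close> in linarith)
  qed
qed

lemma powr_less_iff_log_ratio:
  fixes r x :: real
  assumes "0 < r" "r < 1" "0 < x"
  shows "x < r powr s \<longleftrightarrow> s < ln x / ln r"
    and "r powr s < x \<longleftrightarrow> ln x / ln r < s"
proof -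
  have "ln r < 0" using assms by simp
  have "x < r powr s \<longleftrightarrow> ln x < ln (r powr s)"
    using assms by (intro ln_less_cancel_iff[symmetric]) auto
  also have "\<dots> \<longleftrightarrow> ln x < s * ln r" using assms by (simp add: ln_powr)
  also have "\<dots> \<longleftrightarrow> s < ln x / ln r" using \<open>ln r < 0\<close> by (simp add: field_simps)
  finally show "x < r powr s \<longleftrightarrow> s < ln x / ln r" .
  have "r powr s < x \<longleftrightarrow> ln (r powr s) < ln x"
    using assms by (intro ln_less_cancel_iff[symmetric]) auto
  also have "\<dots> \<longleftrightarrow> s * ln r < ln x" using assms by (simp add: ln_powr)
  also have "\<dots> \<longleftrightarrow> ln x / ln r < s" using \<open>ln r < 0\<close> by (simp add: field_simps)
  finally show "r powr s < x \<longleftrightarrow> ln x / ln r < s" .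
qed

lemma Sup_rat_ge:
  assumes "\<And>q::rat. real_of_rat q < t \<Longrightarrow> P q"
  shows "ereal t \<le> Sup {ereal (real_of_rat q) | q. P q}"
proof (rule dense_le)
  fix y assume "y < ereal t"
  show "y \<le> Sup {ereal (real_of_rat q) | q. P q}"
  proof (cases y)
    case (real w)
    with \<open>y < ereal t\<close> obtain q where "q \<in> \<rat>" "w < q" "q < t"
      using Rats_dense_in_real by auto
    then obtain q' where "q = real_of_rat q'" by (auto elim: Rats_cases)
    with \<open>q < t\<close> assms have "ereal q \<le> Sup {ereal (real_of_rat q) | q. P q}"
      by (intro Sup_upper) blast
    moreover have "ereal w \<le> ereal q" using \<open>w < q\<close> by simp
    ultimately show ?thesis using real by (blast intro: order_trans)
  qed (use \<open>y < ereal t\<close> in simp_all)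
qed

lemma unorm_nonneg: "0 \<le> unorm v"
  by (simp add: unorm_def)

lemma unorm_eq_0_iff: "unorm v = 0 \<longleftrightarrow> v = \<infinity>"
  by (simp add: unorm_def)

lemma unorm_antimono: "a \<le> b \<Longrightarrow> a \<noteq> -\<infinity> \<Longrightarrow> unorm b \<le> unorm a"
  by (cases a; cases b) (auto simp: unorm_def)

lemma unorm_less_exp_iff: "unorm v < exp (- real n) \<longleftrightarrow> ereal (real n) < v" if "v \<noteq> -\<infinity>"
  using that by (cases v) (auto simp: unorm_def)

lemma abs_Re_diff_le_cmod: "\<bar>Re z - Re w\<bar> \<le> cmod (z - w)"
  using abs_Re_le_cmod[of "z - w"] by simp

lemma abs_Im_diff_le_cmod: "\<bar>Im z - Im w\<bar> \<le> cmod (z - w)"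
  using abs_Im_le_cmod[of "z - w"] by simp

lemma abs_Re_sub_real_le: "\<bar>Re z - t\<bar> \<le> cmod (z - of_real t)"
  using abs_Re_diff_le_cmod[of z "of_real t"] by simp

lemma cmod_complex_le: "cmod (of_real x + \<i> * of_real y) \<le> \<bar>x\<bar> + \<bar>y\<bar>"
  using norm_triangle_ineq[of "of_real x" "\<i> * of_real y"] by (simp add: norm_mult)

lemma Rphi_pos:
  assumes "\<phi> \<in> Dn n"
  shows "0 < Rphi \<phi>"
proof -
  have T: "\<phi> \<in> test_fns" and int1: "integral UNIV \<phi> = 1"
    and bound: "\<And>x. cmod (\<phi> x) \<le> Rphi \<phi> powr (- real (2 * DIM('a)))"
    using assms unfolding Dn_def by (auto dest!: spec[of _ "[]"])
  have nz: "\<phi> \<noteq> (\<lambda>_. 0)" using int1 by auto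
  then obtain x0 where x0: "\<phi> x0 \<noteq> 0" by auto
  have "bounded {x. \<phi> x \<noteq> 0}"
    using T unfolding test_fns_def
    by (auto intro: bounded_subset[OF compact_imp_bounded closure_subset])
  then have "bdd_above {norm x | x. \<phi> x \<noteq> 0}"
    by (auto simp: bounded_iff bdd_above_def)
  then have "norm x0 \<le> Rphi \<phi>"
    using nz x0 unfolding Rphi_def by (auto intro!: cSup_upper)
  moreover have "Rphi \<phi> \<noteq> 0" \<comment> \<open>as \<open>0 powr _ = 0\<close>, the sup bound would force \<open>\<phi> = 0\<close>\<close>
    using bound[of x0] x0 by auto
  ultimately show ?thesis using norm_ge_zero[of x0] by linarith
qed

locale asymptotic_numbers =
  fixes U :: "('a::euclidean_space \<Rightarrow> complex) set set"
  assumes ultrafilter: "ultrafilter_on test_fns U"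
    and Dn_mem: "\<And>n::nat. n \<ge> 1 \<Longrightarrow> Dn n \<in> U"
begin

lemma
  shows test_fns_mem: "test_fns \<in> U"
    and empty_not_mem: "{} \<notin> U"
    and Int_mem: "A \<in> U \<Longrightarrow> B \<in> U \<Longrightarrow> A \<inter> B \<in> U"
    and superset_mem: "A \<in> U \<Longrightarrow> A \<subseteq> B \<Longrightarrow> B \<subseteq> test_fns \<Longrightarrow> B \<in> U"
    and mem_or_compl_mem: "A \<subseteq> test_fns \<Longrightarrow> A \<in> U \<or> test_fns - A \<in> U"
  using ultrafilter unfolding ultrafilter_on_def by blast+

definition ae_filter :: "('a \<Rightarrow> complex) filter" where
  "ae_filter = Abs_filter (ae U)"

lemma eventually_ae_filter: "eventually P ae_filter \<longleftrightarrow> ae U P"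
proof -
  have "is_filter (ae U)"
  proof
    show "ae U (\<lambda>_. True)" by (simp add: ae_def test_fns_mem)
    fix P Q :: "('a \<Rightarrow> complex) \<Rightarrow> bool"
    show "ae U (\<lambda>x. P x \<and> Q x)" if "ae U P" "ae U Q"
      using Int_mem[OF that[unfolded ae_def]] by (simp add: ae_def Collect_conj_eq Int_assoc Int_left_commute)
    show "ae U Q" if "\<forall>x. P x \<longrightarrow> Q x" "ae U P"
      using that by (auto simp: ae_def elim!: superset_mem)
  qed
  then show ?thesis unfolding ae_filter_def by (rule eventually_Abs_filter)
qed

lemma eventually_ae_filter_or_not: "eventually P ae_filter \<or> eventually (\<lambda>\<phi>. \<not> P \<phi>) ae_filter"
proof -
  have "test_fns - {\<phi> \<in> test_fns. P \<phi>} = {\<phi> \<in> test_fns. \<not> P \<phi>}" by blast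
  then show ?thesis
    using mem_or_compl_mem[of "{\<phi> \<in> test_fns. P \<phi>}"] by (auto simp: eventually_ae_filter ae_def)
qed

lemma ae_filter_ne_bot [simp]: "ae_filter \<noteq> bot"
  by (simp add: trivial_limit_def eventually_ae_filter ae_def empty_not_mem)

lemma eventually_Rphi_le:
  assumes "0 < c"
  shows "\<forall>\<^sub>F \<phi> in ae_filter. 0 < Rphi \<phi> \<and> Rphi \<phi> \<le> c"
proof -
  obtain n :: nat where n: "1 / c < real n" using reals_Archimedean2 by blast
  have "0 < real n" using n assms by (smt (verit) divide_pos_pos)
  then have "n \<ge> 1" "1 / real n \<le> c"
    using n assms by (auto simp: field_simps)
  have "Dn n \<subseteq> {\<phi> \<in> test_fns. 0 < Rphi \<phi> \<and> Rphi \<phi> \<le> c}"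
  proof
    fix \<phi> assume "\<phi> \<in> Dn n"
    moreover from this have "\<phi> \<in> test_fns" "Rphi \<phi> \<le> 1 / real n" by (simp_all add: Dn_def)
    ultimately show "\<phi> \<in> {\<phi> \<in> test_fns. 0 < Rphi \<phi> \<and> Rphi \<phi> \<le> c}"
      using Rphi_pos \<open>1 / real n \<le> c\<close> by auto
  qed
  then show ?thesis
    using Dn_mem[OF \<open>n \<ge> 1\<close>] unfolding eventually_ae_filter ae_def by (auto elim!: superset_mem)
qed


lemma eventually_Rphi_small: "\<forall>\<^sub>F \<phi> in ae_filter. 0 < Rphi \<phi> \<and> Rphi \<phi> \<le> 1 / 2"
  by (rule eventually_Rphi_le) simp

section \<open>Moderate and negligible nets\<close>

lemma moderate_iff: "A \<in> moderate U \<longleftrightarrow> (\<exists>m. \<forall>\<^sub>F \<phi> in ae_filter. cmod (A \<phi>) \<le> inverse (Rphi \<phi> ^ m))"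
  by (simp add: moderate_def eventually_ae_filter)

lemma negligible_iff: "A \<in> negligible U \<longleftrightarrow> (\<forall>p. \<forall>\<^sub>F \<phi> in ae_filter. cmod (A \<phi>) < Rphi \<phi> ^ p)"
  by (simp add: negligible_def eventually_ae_filter)

lemma eventually_const_mult_Rphi_lt_1: "\<forall>\<^sub>F \<phi> in ae_filter. 0 < Rphi \<phi> \<and> C * Rphi \<phi> < 1"
proof -
  have "\<forall>\<^sub>F \<phi> in ae_filter. 0 < Rphi \<phi> \<and> Rphi \<phi> \<le> 1 / (\<bar>C\<bar> + 1)"
    by (rule eventually_Rphi_le) simp
  then show ?thesis
  proof eventually_elim
    case (elim \<phi>)
    then have "C * Rphi \<phi> \<le> \<bar>C\<bar> * (1 / (\<bar>C\<bar> + 1))"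
      by (intro order.trans[OF mult_right_mono[of C "\<bar>C\<bar>"]] mult_left_mono) auto
    also have "\<dots> < 1" by (simp add: field_simps)
    finally show ?case using elim by simp
  qed
qed

lemma moderateI:
  assumes "\<forall>\<^sub>F \<phi> in ae_filter. cmod (A \<phi>) \<le> C * inverse (Rphi \<phi> ^ m)"
  shows "A \<in> moderate U"
proof -
  have "\<forall>\<^sub>F \<phi> in ae_filter. cmod (A \<phi>) \<le> inverse (Rphi \<phi> ^ Suc m)"
    using assms eventually_const_mult_Rphi_lt_1[of C]
  proof eventually_elim
    case (elim \<phi>)
    have "cmod (A \<phi>) \<le> C * inverse (Rphi \<phi> ^ m)" by (fact elim(1))
    also have "\<dots> \<le> inverse (Rphi \<phi>) * inverse (Rphi \<phi> ^ m)"
      using elim(2) by (intro mult_right_mono) (auto simp: field_simps)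
    also have "\<dots> = inverse (Rphi \<phi> ^ Suc m)" by (simp add: inverse_mult_distrib)
    finally show ?case .
  qed
  then show ?thesis unfolding moderate_iff by blast
qed

lemma negligibleI:
  assumes "\<And>p. \<exists>C. \<forall>\<^sub>F \<phi> in ae_filter. cmod (A \<phi>) \<le> C * Rphi \<phi> ^ Suc p"
  shows "A \<in> negligible U"
  unfolding negligible_iff
proof
  fix p
  obtain C where "\<forall>\<^sub>F \<phi> in ae_filter. cmod (A \<phi>) \<le> C * Rphi \<phi> ^ Suc p" using assms by blast
  with eventually_const_mult_Rphi_lt_1[of C]
  show "\<forall>\<^sub>F \<phi> in ae_filter. cmod (A \<phi>) < Rphi \<phi> ^ p"
  proof eventually_elim
    case (elim \<phi>)
    have "cmod (A \<phi>) \<le> C * Rphi \<phi> * Rphi \<phi> ^ p" using elim(2) by (simp add: mult.assoc)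
    also have "\<dots> < 1 * Rphi \<phi> ^ p" using elim(1) by (intro mult_strict_right_mono) auto
    finally show ?case by simp
  qed
qed

lemma negligible_imp_moderate: "A \<in> negligible U \<Longrightarrow> A \<in> moderate U"
  unfolding negligible_iff moderate_iff
  by (rule exI[of _ 0], erule allE[of _ 0]) (auto elim: eventually_mono)

lemma negligible_if_eventually_zero: "\<forall>\<^sub>F \<phi> in ae_filter. A \<phi> = 0 \<Longrightarrow> A \<in> negligible U"
  by (rule negligibleI) (auto elim!: eventually_mono intro: exI[of _ 0])

lemma moderate_const: "(\<lambda>_. c) \<in> moderate U"
  by (rule moderateI[of _ "cmod c" 0]) simp

lemma moderate_le_add:
  assumes "A \<in> moderate U" "B \<in> moderate U"
    and "\<forall>\<^sub>F \<phi> in ae_filter. cmod (C \<phi>) \<le> cmod (A \<phi>) + cmod (B \<phi>)"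
  shows "C \<in> moderate U"
proof -
  obtain m n where
    "\<forall>\<^sub>F \<phi> in ae_filter. cmod (A \<phi>) \<le> inverse (Rphi \<phi> ^ m)"
    "\<forall>\<^sub>F \<phi> in ae_filter. cmod (B \<phi>) \<le> inverse (Rphi \<phi> ^ n)"
    using assms(1,2) unfolding moderate_iff by blast
  with assms(3) eventually_Rphi_small
  have "\<forall>\<^sub>F \<phi> in ae_filter. cmod (C \<phi>) \<le> 2 * inverse (Rphi \<phi> ^ (m + n))"
  proof eventually_elim
    case (elim \<phi>)
    then have "inverse (Rphi \<phi> ^ m) \<le> inverse (Rphi \<phi> ^ (m + n))"
      "inverse (Rphi \<phi> ^ n) \<le> inverse (Rphi \<phi> ^ (m + n))"
      by (auto intro!: le_imp_inverse_le power_decreasing)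
    then show ?case using elim by linarith
  qed
  then show ?thesis by (rule moderateI)
qed

lemma moderate_le:
  assumes "A \<in> moderate U" "\<forall>\<^sub>F \<phi> in ae_filter. cmod (B \<phi>) \<le> cmod (A \<phi>)"
  shows "B \<in> moderate U"
  using assms(2) by (intro moderate_le_add[OF assms(1) assms(1)]) (erule eventually_mono, meson add_increasing2 norm_ge_zero)

lemma moderate_add: "A \<in> moderate U \<Longrightarrow> B \<in> moderate U \<Longrightarrow> (\<lambda>\<phi>. A \<phi> + B \<phi>) \<in> moderate U"
  by (erule (1) moderate_le_add) (simp add: norm_triangle_ineq)

lemma moderate_diff: "A \<in> moderate U \<Longrightarrow> B \<in> moderate U \<Longrightarrow> (\<lambda>\<phi>. A \<phi> - B \<phi>) \<in> moderate U"
  by (erule (1) moderate_le_add) (simp add: norm_triangle_ineq4)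

lemma moderate_uminus: "A \<in> moderate U \<Longrightarrow> (\<lambda>\<phi>. - A \<phi>) \<in> moderate U"
  by (erule moderate_le) simp

lemma moderate_mult:
  assumes "A \<in> moderate U" "B \<in> moderate U"
  shows "(\<lambda>\<phi>. A \<phi> * B \<phi>) \<in> moderate U"
proof -
  obtain m n where
    "\<forall>\<^sub>F \<phi> in ae_filter. cmod (A \<phi>) \<le> inverse (Rphi \<phi> ^ m)"
    "\<forall>\<^sub>F \<phi> in ae_filter. cmod (B \<phi>) \<le> inverse (Rphi \<phi> ^ n)"
    using assms unfolding moderate_iff by blast
  then have "\<forall>\<^sub>F \<phi> in ae_filter. cmod (A \<phi> * B \<phi>) \<le> 1 * inverse (Rphi \<phi> ^ (m + n))"
    by eventually_elim (simp add: norm_mult power_add, meson mult_mono norm_ge_zero order_trans)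
  then show ?thesis by (rule moderateI)
qed

lemma negligible_le_add:
  assumes "A \<in> negligible U" "B \<in> negligible U"
    and "\<forall>\<^sub>F \<phi> in ae_filter. cmod (C \<phi>) \<le> cmod (A \<phi>) + cmod (B \<phi>)"
  shows "C \<in> negligible U"
proof (rule negligibleI)
  fix p
  have "\<forall>\<^sub>F \<phi> in ae_filter. cmod (C \<phi>) \<le> 2 * Rphi \<phi> ^ Suc p"
    using assms(1,2)[unfolded negligible_iff, THEN spec[of _ "Suc p"]] assms(3)
    by eventually_elim linarith
  then show "\<exists>C'. \<forall>\<^sub>F \<phi> in ae_filter. cmod (C \<phi>) \<le> C' * Rphi \<phi> ^ Suc p" by blast
qed

lemma negligible_le:
  assumes "A \<in> negligible U" "\<forall>\<^sub>F \<phi> in ae_filter. cmod (B \<phi>) \<le> cmod (A \<phi>)"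
  shows "B \<in> negligible U"
  using assms(2) by (intro negligible_le_add[OF assms(1) assms(1)]) (erule eventually_mono, meson add_increasing2 norm_ge_zero)

lemma negligible_add:
  "A \<in> negligible U \<Longrightarrow> B \<in> negligible U \<Longrightarrow> (\<lambda>\<phi>. A \<phi> + B \<phi>) \<in> negligible U"
  by (erule (1) negligible_le_add) (simp add: norm_triangle_ineq)

lemma negligible_diff:
  "A \<in> negligible U \<Longrightarrow> B \<in> negligible U \<Longrightarrow> (\<lambda>\<phi>. A \<phi> - B \<phi>) \<in> negligible U"
  by (erule (1) negligible_le_add) (simp add: norm_triangle_ineq4)

lemma negligible_uminus: "A \<in> negligible U \<Longrightarrow> (\<lambda>\<phi>. - A \<phi>) \<in> negligible U"
  by (erule negligible_le) simp

lemma negligible_zero: "(\<lambda>_. 0) \<in> negligible U"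
  by (rule negligible_if_eventually_zero) simp

lemma negligible_mult:
  assumes "A \<in> moderate U" "B \<in> negligible U"
  shows "(\<lambda>\<phi>. A \<phi> * B \<phi>) \<in> negligible U"
proof (rule negligibleI)
  fix p
  obtain m where m: "\<forall>\<^sub>F \<phi> in ae_filter. cmod (A \<phi>) \<le> inverse (Rphi \<phi> ^ m)"
    using assms(1) unfolding moderate_iff by blast
  have "\<forall>\<^sub>F \<phi> in ae_filter. cmod (A \<phi> * B \<phi>) \<le> 1 * Rphi \<phi> ^ Suc p"
    using m assms(2)[unfolded negligible_iff, THEN spec[of _ "Suc p + m"]] eventually_Rphi_small
  proof eventually_elim
    case (elim \<phi>)
    have "cmod (A \<phi> * B \<phi>) \<le> inverse (Rphi \<phi> ^ m) * Rphi \<phi> ^ (Suc p + m)"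
      unfolding norm_mult using elim by (intro mult_mono) auto
    also have "\<dots> = 1 * Rphi \<phi> ^ Suc p" using elim(3) by (simp add: power_add field_simps)
    finally show ?case .
  qed
  then show "\<exists>C. \<forall>\<^sub>F \<phi> in ae_filter. cmod (A \<phi> * B \<phi>) \<le> C * Rphi \<phi> ^ Suc p" by blast
qed

lemma not_negligible_lower_bound:
  assumes "A \<notin> negligible U"
  obtains p where "\<forall>\<^sub>F \<phi> in ae_filter. Rphi \<phi> ^ p \<le> cmod (A \<phi>)"
proof -
  obtain p where "\<not> (\<forall>\<^sub>F \<phi> in ae_filter. cmod (A \<phi>) < Rphi \<phi> ^ p)"
    using assms unfolding negligible_iff by blast
  then have "\<forall>\<^sub>F \<phi> in ae_filter. \<not> cmod (A \<phi>) < Rphi \<phi> ^ p"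
    using eventually_ae_filter_or_not by blast
  then have "\<forall>\<^sub>F \<phi> in ae_filter. Rphi \<phi> ^ p \<le> cmod (A \<phi>)" by (rule eventually_mono) simp
  then show ?thesis by (rule that)
qed


section \<open>The field of asymptotic numbers\<close>

lemma mem_asym_cls: "B \<in> asym_cls U A \<longleftrightarrow> B \<in> moderate U \<and> (\<lambda>\<phi>. A \<phi> - B \<phi>) \<in> negligible U"
  by (simp add: asym_cls_def)

lemma negligible_diff_commute:
  "(\<lambda>\<phi>. A \<phi> - B \<phi>) \<in> negligible U \<Longrightarrow> (\<lambda>\<phi>. B \<phi> - A \<phi>) \<in> negligible U"
  by (drule negligible_uminus) simp

lemma negligible_diff_trans:
  "(\<lambda>\<phi>. A \<phi> - B \<phi>) \<in> negligible U \<Longrightarrow> (\<lambda>\<phi>. B \<phi> - C \<phi>) \<in> negligible U \<Longrightarrow>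
    (\<lambda>\<phi>. A \<phi> - C \<phi>) \<in> negligible U"
  by (drule (1) negligible_add) simp

lemma asym_cls_self: "A \<in> moderate U \<Longrightarrow> A \<in> asym_cls U A"
  by (simp add: mem_asym_cls negligible_zero)

lemma asym_cls_eqI: "(\<lambda>\<phi>. A \<phi> - B \<phi>) \<in> negligible U \<Longrightarrow> asym_cls U A = asym_cls U B"
  unfolding asym_cls_def by (blast intro: negligible_diff_trans negligible_diff_commute)

lemma asym_cls_eq_iff:
  "A \<in> moderate U \<Longrightarrow> B \<in> moderate U \<Longrightarrow>
    asym_cls U A = asym_cls U B \<longleftrightarrow> (\<lambda>\<phi>. A \<phi> - B \<phi>) \<in> negligible U"
  by (metis asym_cls_eqI asym_cls_self mem_asym_cls negligible_diff_commute)

lemma asym_cls_eq_zero_iff: "A \<in> moderate U \<Longrightarrow> asym_cls U A = asym_cls U (\<lambda>_. 0) \<longleftrightarrow> A \<in> negligible U"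
  by (simp add: asym_cls_eq_iff moderate_const)

lemma asym_cls_eq_if_mem: "A' \<in> asym_cls U A \<Longrightarrow> asym_cls U A' = asym_cls U A"
  by (rule asym_cls_eqI) (simp add: mem_asym_cls negligible_diff_commute)

lemma asym_cls_empty: "A \<notin> moderate U \<Longrightarrow> asym_cls U A = {}"
  unfolding asym_cls_def
  by (force dest: negligible_imp_moderate moderate_add[of _ "\<lambda>\<phi>. _ \<phi> - _ \<phi>"])

lemma rep_asym_cls: "A \<in> moderate U \<Longrightarrow> rep (asym_cls U A) \<in> asym_cls U A"
  unfolding rep_def by (rule someI[of _ A]) (simp add: asym_cls_self)

lemma rep_moderate: "A \<in> moderate U \<Longrightarrow> rep (asym_cls U A) \<in> moderate U"
  using rep_asym_cls mem_asym_cls by blast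

lemma rep_diff_negligible: "A \<in> moderate U \<Longrightarrow> (\<lambda>\<phi>. rep (asym_cls U A) \<phi> - A \<phi>) \<in> negligible U"
  using rep_asym_cls mem_asym_cls negligible_diff_commute by blast

lemma asym_cls_rep: "A \<in> moderate U \<Longrightarrow> asym_cls U (rep (asym_cls U A)) = asym_cls U A"
  by (rule asym_cls_eq_if_mem) (rule rep_asym_cls)

lemma AsymC_I: "A \<in> moderate U \<Longrightarrow> asym_cls U A \<in> AsymC U"
  unfolding AsymC_def by blast

lemma AsymC_cases:
  assumes "X \<in> AsymC U"
  obtains A where "A \<in> moderate U" "X = asym_cls U A"
  using assms unfolding AsymC_def by blast

lemma AsymC_rep: "X \<in> AsymC U \<Longrightarrow> rep X \<in> moderate U \<and> X = asym_cls U (rep X)"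
  by (auto elim!: AsymC_cases simp: rep_moderate asym_cls_rep)

lemma asym_ring_simps [simp]:
  "carrier (asym_ring U) = AsymC U"
  "\<zero>\<^bsub>asym_ring U\<^esub> = asym_cls U (\<lambda>_. 0)"
  "\<one>\<^bsub>asym_ring U\<^esub> = asym_cls U (\<lambda>_. 1)"
  by (simp_all add: asym_ring_def)

lemma asym_cls_add_cong:
  assumes "A' \<in> asym_cls U A" "B' \<in> asym_cls U B"
  shows "asym_cls U (\<lambda>\<phi>. A' \<phi> + B' \<phi>) = asym_cls U (\<lambda>\<phi>. A \<phi> + B \<phi>)"
proof -
  have "(\<lambda>\<phi>. A' \<phi> - A \<phi>) \<in> negligible U" "(\<lambda>\<phi>. B' \<phi> - B \<phi>) \<in> negligible U"
    using assms negligible_diff_commute[of A A'] negligible_diff_commute[of B B']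
    by (simp_all add: mem_asym_cls)
  then have "(\<lambda>\<phi>. (A' \<phi> - A \<phi>) + (B' \<phi> - B \<phi>)) \<in> negligible U" by (rule negligible_add)
  then show ?thesis by (intro asym_cls_eqI) (simp add: algebra_simps)
qed

lemma asym_cls_mult_cong:
  assumes "A' \<in> asym_cls U A" "B' \<in> asym_cls U B"
  shows "asym_cls U (\<lambda>\<phi>. A' \<phi> * B' \<phi>) = asym_cls U (\<lambda>\<phi>. A \<phi> * B \<phi>)"
proof -
  have A': "A' \<in> moderate U" using assms(1) by (simp add: mem_asym_cls)
  have B: "B \<in> moderate U" using assms(2) asym_cls_empty by blast
  have "(\<lambda>\<phi>. A' \<phi> - A \<phi>) \<in> negligible U" "(\<lambda>\<phi>. B' \<phi> - B \<phi>) \<in> negligible U"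
    using assms negligible_diff_commute[of A A'] negligible_diff_commute[of B B']
    by (simp_all add: mem_asym_cls)
  then have "(\<lambda>\<phi>. A' \<phi> * (B' \<phi> - B \<phi>) + B \<phi> * (A' \<phi> - A \<phi>)) \<in> negligible U"
    by (intro negligible_add negligible_mult[OF A'] negligible_mult[OF B])
  then show ?thesis by (intro asym_cls_eqI) (simp add: algebra_simps)
qed

lemma asym_cls_diff_cong:
  assumes "A' \<in> asym_cls U A" "B' \<in> asym_cls U B"
  shows "asym_cls U (\<lambda>\<phi>. A' \<phi> - B' \<phi>) = asym_cls U (\<lambda>\<phi>. A \<phi> - B \<phi>)"
proof -
  have "(\<lambda>\<phi>. A' \<phi> - A \<phi>) \<in> negligible U" "(\<lambda>\<phi>. B' \<phi> - B \<phi>) \<in> negligible U"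
    using assms negligible_diff_commute[of A A'] negligible_diff_commute[of B B']
    by (simp_all add: mem_asym_cls)
  then have "(\<lambda>\<phi>. (A' \<phi> - A \<phi>) - (B' \<phi> - B \<phi>)) \<in> negligible U" by (rule negligible_diff)
  then show ?thesis by (intro asym_cls_eqI) (simp add: algebra_simps)
qed

lemma asym_add_cls:
  assumes "A \<in> moderate U" "B \<in> moderate U"
  shows "asym_cls U A \<oplus>\<^bsub>asym_ring U\<^esub> asym_cls U B = asym_cls U (\<lambda>\<phi>. A \<phi> + B \<phi>)"
  using asym_cls_add_cong[OF rep_asym_cls rep_asym_cls] assms by (simp add: asym_ring_def)

lemma asym_mult_cls:
  assumes "A \<in> moderate U" "B \<in> moderate U"
  shows "asym_cls U A \<otimes>\<^bsub>asym_ring U\<^esub> asym_cls U B = asym_cls U (\<lambda>\<phi>. A \<phi> * B \<phi>)"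
  using asym_cls_mult_cong[OF rep_asym_cls rep_asym_cls] assms by (simp add: asym_ring_def)

lemma asym_minus_cls:
  assumes "A \<in> moderate U" "B \<in> moderate U"
  shows "asym_minus U (asym_cls U A) (asym_cls U B) = asym_cls U (\<lambda>\<phi>. A \<phi> - B \<phi>)"
  using asym_cls_diff_cong[OF rep_asym_cls rep_asym_cls] assms by (simp add: asym_minus_def)

lemma asym_ring_cring: "cring (asym_ring U)"
proof -
  have neg: "\<exists>Y\<in>AsymC U. Y \<oplus>\<^bsub>asym_ring U\<^esub> asym_cls U A = asym_cls U (\<lambda>_. 0)" if "A \<in> moderate U" for A
    using that by (intro bexI[of _ "asym_cls U (\<lambda>\<phi>. - A \<phi>)"]) (simp_all add: asym_add_cls moderate_uminus AsymC_I)
  show ?thesis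
    by (rule cringI[OF abelian_groupI comm_monoidI])
      (auto elim!: AsymC_cases intro: neg
        simp: asym_add_cls asym_mult_cls AsymC_I moderate_add moderate_mult moderate_const algebra_simps)
qed

lemma asym_inverse_cls:
  assumes "A \<in> moderate U" "A \<notin> negligible U"
  shows "(\<lambda>\<phi>. inverse (A \<phi>)) \<in> moderate U"
    and "asym_cls U A \<otimes>\<^bsub>asym_ring U\<^esub> asym_cls U (\<lambda>\<phi>. inverse (A \<phi>)) = asym_cls U (\<lambda>_. 1)"
proof -
  obtain p where p: "\<forall>\<^sub>F \<phi> in ae_filter. Rphi \<phi> ^ p \<le> cmod (A \<phi>)"
    using not_negligible_lower_bound[OF assms(2)] by blast
  have "\<forall>\<^sub>F \<phi> in ae_filter. cmod (inverse (A \<phi>)) \<le> 1 * inverse (Rphi \<phi> ^ p) \<and> A \<phi> \<noteq> 0"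
    using p eventually_Rphi_small
  proof eventually_elim
    case (elim \<phi>)
    then have "0 < Rphi \<phi> ^ p" by simp
    with elim have "0 < cmod (A \<phi>)" by linarith
    with elim \<open>0 < Rphi \<phi> ^ p\<close> show ?case by (simp add: norm_inverse le_imp_inverse_le)
  qed
  then show inv: "(\<lambda>\<phi>. inverse (A \<phi>)) \<in> moderate U"
    by (intro moderateI[of _ 1 p]) (auto elim: eventually_mono)
  have "(\<lambda>\<phi>. A \<phi> * inverse (A \<phi>) - 1) \<in> negligible U"
    using \<open>\<forall>\<^sub>F \<phi> in ae_filter. _ \<and> A \<phi> \<noteq> 0\<close>
    by (intro negligible_if_eventually_zero) (auto elim: eventually_mono)
  then show "asym_cls U A \<otimes>\<^bsub>asym_ring U\<^esub> asym_cls U (\<lambda>\<phi>. inverse (A \<phi>)) = asym_cls U (\<lambda>_. 1)"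
    by (simp add: asym_mult_cls[OF assms(1) inv] asym_cls_eqI)
qed

lemma asym_ring_field: "field (asym_ring U)"
proof (rule cring.cring_fieldI2[OF asym_ring_cring])
  have "(\<lambda>_. 0 - 1::complex) \<notin> negligible U"
    unfolding negligible_iff by (intro notI, drule spec[of _ 0]) simp
  then show "\<zero>\<^bsub>asym_ring U\<^esub> \<noteq> \<one>\<^bsub>asym_ring U\<^esub>"
    by (simp add: asym_cls_eq_iff moderate_const)
next
  fix X assume X: "X \<in> carrier (asym_ring U)" "X \<noteq> \<zero>\<^bsub>asym_ring U\<^esub>"
  then obtain A where A: "A \<in> moderate U" "X = asym_cls U A" by (auto elim: AsymC_cases)
  with X(2) have "A \<notin> negligible U" by (simp add: asym_cls_eq_zero_iff)
  with A show "\<exists>Y\<in>carrier (asym_ring U). X \<otimes>\<^bsub>asym_ring U\<^esub> Y = \<one>\<^bsub>asym_ring U\<^esub>"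
    by (auto intro!: bexI[where x = "asym_cls U (\<lambda>\<phi>. inverse (A \<phi>))"] AsymC_I asym_inverse_cls)
qed


section \<open>Transfer to the Robinson field\<close>

lemma mem_star_cls: "B \<in> star_cls U A \<longleftrightarrow> (\<forall>\<^sub>F \<phi> in ae_filter. A \<phi> = B \<phi>)"
  by (simp add: star_cls_def eventually_ae_filter)

lemma star_cls_eq_iff: "star_cls U A = star_cls U B \<longleftrightarrow> (\<forall>\<^sub>F \<phi> in ae_filter. A \<phi> = B \<phi>)"
proof
  assume eq: "star_cls U A = star_cls U B"
  have "B \<in> star_cls U B" by (simp add: mem_star_cls)
  then have "B \<in> star_cls U A" by (simp only: eq)
  then show "\<forall>\<^sub>F \<phi> in ae_filter. A \<phi> = B \<phi>" by (simp only: mem_star_cls)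
next
  assume eq: "\<forall>\<^sub>F \<phi> in ae_filter. A \<phi> = B \<phi>"
  have "C \<in> star_cls U A \<longleftrightarrow> C \<in> star_cls U B" for C
    unfolding mem_star_cls by (rule eventually_subst[OF eventually_mono[OF eq]]) simp
  then show "star_cls U A = star_cls U B" by blast
qed

lemma rep_star_cls: "\<forall>\<^sub>F \<phi> in ae_filter. A \<phi> = rep (star_cls U A) \<phi>"
proof -
  have "rep (star_cls U A) \<in> star_cls U A"
    unfolding rep_def by (rule someI[of _ A]) (simp add: mem_star_cls)
  then show ?thesis by (simp add: mem_star_cls)
qed

lemma star_lift1_cls [simp]: "star_lift1 U f (star_cls U A) = star_cls U (\<lambda>\<phi>. f (A \<phi>))"
  unfolding star_lift1_def star_cls_eq_iff using rep_star_cls[of A] by eventually_elim simp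

lemma star_lift2_cls [simp]:
  "star_lift2 U f (star_cls U A) (star_cls U B) = star_cls U (\<lambda>\<phi>. f (A \<phi>) (B \<phi>))"
  unfolding star_lift2_def star_cls_eq_iff using rep_star_cls[of A] rep_star_cls[of B]
  by eventually_elim simp

lemma star_less_cls:
  "star_less U (star_cls U A) (star_cls U B) \<longleftrightarrow> (\<forall>\<^sub>F \<phi> in ae_filter. Re (A \<phi>) < Re (B \<phi>))"
  unfolding star_less_def eventually_ae_filter[symmetric]
  by (rule eventually_subst) (use rep_star_cls[of A] rep_star_cls[of B] in eventually_elim, simp)

lemma eventually_less_or_eq_iff_le:
  "(\<forall>\<^sub>F \<phi> in ae_filter. f \<phi> < (g \<phi> :: real)) \<or> (\<forall>\<^sub>F \<phi> in ae_filter. f \<phi> = g \<phi>) \<longleftrightarrow>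
    (\<forall>\<^sub>F \<phi> in ae_filter. f \<phi> \<le> g \<phi>)"
proof
  assume le: "\<forall>\<^sub>F \<phi> in ae_filter. f \<phi> \<le> g \<phi>"
  show "(\<forall>\<^sub>F \<phi> in ae_filter. f \<phi> < g \<phi>) \<or> (\<forall>\<^sub>F \<phi> in ae_filter. f \<phi> = g \<phi>)"
  proof (cases "\<forall>\<^sub>F \<phi> in ae_filter. f \<phi> < g \<phi>")
    case False
    then have "\<forall>\<^sub>F \<phi> in ae_filter. \<not> f \<phi> < g \<phi>" using eventually_ae_filter_or_not by blast
    with le have "\<forall>\<^sub>F \<phi> in ae_filter. f \<phi> = g \<phi>" by eventually_elim simp
    then show ?thesis ..
  qed simp
qed (elim disjE; erule eventually_mono; simp)

lemma star_less_real_cls: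
  "star_less U (star_cls U (\<lambda>\<phi>. of_real (f \<phi>))) (star_cls U (\<lambda>\<phi>. of_real (g \<phi>))) \<longleftrightarrow>
    (\<forall>\<^sub>F \<phi> in ae_filter. f \<phi> < g \<phi>)"
  by (simp add: star_less_cls)

lemma star_le_real_cls:
  "star_le U (star_cls U (\<lambda>\<phi>. of_real (f \<phi>))) (star_cls U (\<lambda>\<phi>. of_real (g \<phi>))) \<longleftrightarrow>
    (\<forall>\<^sub>F \<phi> in ae_filter. f \<phi> \<le> g \<phi>)"
  unfolding star_le_def star_less_real_cls star_cls_eq_iff of_real_eq_iff eventually_less_or_eq_iff_le ..

lemma star_abs_cls: "star_abs U (star_cls U A) = star_cls U (\<lambda>\<phi>. of_real (cmod (A \<phi>)))"
  by (simp add: star_abs_def)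

lemma star_rho_power: "star_lift1 U (\<lambda>z. z ^ m) (star_rho U) = star_cls U (\<lambda>\<phi>. of_real (Rphi \<phi> ^ m))"
  by (simp add: star_rho_def)

lemma star_rho_inverse_power:
  "star_lift1 U inverse (star_lift1 U (\<lambda>z. z ^ m) (star_rho U)) = star_cls U (\<lambda>\<phi>. of_real (inverse (Rphi \<phi> ^ m)))"
  by (simp add: star_rho_def)

lemma M_rho_iff: "star_cls U A \<in> M_rho U \<longleftrightarrow> A \<in> moderate U"
  unfolding M_rho_def mem_Collect_eq star_abs_cls star_rho_inverse_power star_le_real_cls moderate_iff
  by (simp add: StarC_def)

lemma N_rho_iff: "star_cls U A \<in> N_rho U \<longleftrightarrow> A \<in> negligible U"
  unfolding N_rho_def mem_Collect_eq star_abs_cls star_rho_power star_less_real_cls negligible_iff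
  by (simp add: StarC_def)

lemma M_rho_cases:
  assumes "\<eta> \<in> M_rho U"
  obtains A where "A \<in> moderate U" "\<eta> = star_cls U A"
  using assms M_rho_iff unfolding M_rho_def StarC_def by auto

lemma rob_cls_star_cls: "rob_cls U (star_cls U A) = star_cls U ` asym_cls U A"
proof (intro Set.set_eqI iffI)
  fix \<eta> assume "\<eta> \<in> rob_cls U (star_cls U A)"
  then have \<eta>: "\<eta> \<in> M_rho U" "star_lift2 U (-) (star_cls U A) \<eta> \<in> N_rho U"
    by (simp_all add: rob_cls_def)
  obtain B where "B \<in> moderate U" "\<eta> = star_cls U B" using \<eta>(1) by (rule M_rho_cases)
  with \<eta>(2) show "\<eta> \<in> star_cls U ` asym_cls U A"
    by (auto simp: N_rho_iff mem_asym_cls)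
next
  fix \<eta> assume "\<eta> \<in> star_cls U ` asym_cls U A"
  then show "\<eta> \<in> rob_cls U (star_cls U A)"
    by (auto simp: rob_cls_def mem_asym_cls M_rho_iff N_rho_iff)
qed

lemma Phi_cls: "A \<in> moderate U \<Longrightarrow> Phi U (asym_cls U A) = star_cls U ` asym_cls U A"
  by (simp add: Phi_def rob_cls_star_cls asym_cls_rep)

lemma rep_Phi_cls:
  assumes "A \<in> moderate U"
  obtains A' where "A' \<in> asym_cls U A" "rep (star_cls U ` asym_cls U A) = star_cls U A'"
proof -
  have "rep (star_cls U ` asym_cls U A) \<in> star_cls U ` asym_cls U A"
    unfolding rep_def by (rule someI[of _ "star_cls U A"]) (simp add: asym_cls_self assms)
  then show ?thesis using that by blast
qed

lemma Phi_cls_inject: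
  assumes "A \<in> moderate U" "B \<in> moderate U"
    and "star_cls U ` asym_cls U A = star_cls U ` asym_cls U B"
  shows "asym_cls U A = asym_cls U B"
proof -
  obtain B' where B': "B' \<in> asym_cls U B" "star_cls U A = star_cls U B'"
    using assms(3) asym_cls_self[OF assms(1)] by blast
  then have "(\<lambda>\<phi>. A \<phi> - B' \<phi>) \<in> negligible U"
    by (auto simp: star_cls_eq_iff intro: negligible_if_eventually_zero elim: eventually_mono)
  then show ?thesis
    using asym_cls_eqI asym_cls_eq_if_mem[OF B'(1)] by metis
qed

lemma rob_cls_lift2:
  assumes "A \<in> moderate U" "B \<in> moderate U"
    and cong: "\<And>A' B'. A' \<in> asym_cls U A \<Longrightarrow> B' \<in> asym_cls U B \<Longrightarrow>
      asym_cls U (\<lambda>\<phi>. f (A' \<phi>) (B' \<phi>)) = asym_cls U (\<lambda>\<phi>. f (A \<phi>) (B \<phi>))"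
  shows "rob_cls U (star_lift2 U f (rep (star_cls U ` asym_cls U A)) (rep (star_cls U ` asym_cls U B)))
    = star_cls U ` asym_cls U (\<lambda>\<phi>. f (A \<phi>) (B \<phi>))"
proof -
  obtain A' B' where A': "A' \<in> asym_cls U A" "rep (star_cls U ` asym_cls U A) = star_cls U A'"
    and B': "B' \<in> asym_cls U B" "rep (star_cls U ` asym_cls U B) = star_cls U B'"
    using rep_Phi_cls[OF assms(1)] rep_Phi_cls[OF assms(2)] by metis
  show ?thesis using A' B' cong[OF A'(1) B'(1)] by (simp add: rob_cls_star_cls)
qed

lemma RobC_eq: "RobC U = Phi U ` AsymC U"
proof -
  have "RobC U = (\<lambda>A. rob_cls U (star_cls U A)) ` moderate U"
    unfolding RobC_def by (auto elim!: M_rho_cases simp: M_rho_iff)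
  also have "\<dots> = Phi U ` AsymC U"
    unfolding AsymC_def image_image by (intro image_cong) (simp_all add: Phi_cls rob_cls_star_cls)
  finally show ?thesis .
qed

lemma RobR_eq: "RobR U = Phi U ` AsymR U"
proof -
  have "M_rho U \<inter> StarR U = star_cls U ` (moderate U \<inter> {A. realnet A})"
    unfolding StarR_def by (auto simp: M_rho_iff)
  then have "RobR U = (\<lambda>A. rob_cls U (star_cls U A)) ` (moderate U \<inter> {A. realnet A})"
    unfolding RobR_def by (simp add: image_image)
  also have "\<dots> = Phi U ` AsymR U"
    unfolding AsymR_def image_image by (intro image_cong) (simp_all add: Phi_cls rob_cls_star_cls)
  finally show ?thesis .
qed

lemma inj_on_Phi: "inj_on (Phi U) (AsymC U)"
proof (rule inj_onI)
  fix X Y assume X: "X \<in> AsymC U" and Y: "Y \<in> AsymC U" and eq: "Phi U X = Phi U Y"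
  obtain A where A: "A \<in> moderate U" "X = asym_cls U A" using X by (rule AsymC_cases)
  obtain B where B: "B \<in> moderate U" "Y = asym_cls U B" using Y by (rule AsymC_cases)
  show "X = Y" using Phi_cls_inject[OF A(1) B(1)] eq by (simp add: A B Phi_cls A(1) B(1))
qed

lemma Phi_ring_iso: "Phi U \<in> ring_iso (asym_ring U) (rob_ring U)"
proof (rule ring_iso_memI)
  show "Phi U X \<in> carrier (rob_ring U)" if "X \<in> carrier (asym_ring U)" for X
    using that by (simp add: rob_ring_def RobC_eq)
next
  fix X Y assume "X \<in> carrier (asym_ring U)" "Y \<in> carrier (asym_ring U)"
  then obtain A B where AB: "A \<in> moderate U" "B \<in> moderate U" "X = asym_cls U A" "Y = asym_cls U B"
    by (auto elim!: AsymC_cases)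
  have Phi_X: "Phi U X = star_cls U ` asym_cls U A" and Phi_Y: "Phi U Y = star_cls U ` asym_cls U B"
    using AB by (simp_all add: Phi_cls)
  have "Phi U (X \<otimes>\<^bsub>asym_ring U\<^esub> Y) = star_cls U ` asym_cls U (\<lambda>\<phi>. A \<phi> * B \<phi>)"
    using AB by (simp add: asym_mult_cls Phi_cls moderate_mult)
  also have "\<dots> = Phi U X \<otimes>\<^bsub>rob_ring U\<^esub> Phi U Y"
    unfolding Phi_X Phi_Y rob_ring_def
    using rob_cls_lift2[where f = "(*)", OF AB(1,2) asym_cls_mult_cong] by simp
  finally show "Phi U (X \<otimes>\<^bsub>asym_ring U\<^esub> Y) = Phi U X \<otimes>\<^bsub>rob_ring U\<^esub> Phi U Y" .
  have "Phi U (X \<oplus>\<^bsub>asym_ring U\<^esub> Y) = star_cls U ` asym_cls U (\<lambda>\<phi>. A \<phi> + B \<phi>)"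
    using AB by (simp add: asym_add_cls Phi_cls moderate_add)
  also have "\<dots> = Phi U X \<oplus>\<^bsub>rob_ring U\<^esub> Phi U Y"
    unfolding Phi_X Phi_Y rob_ring_def
    using rob_cls_lift2[where f = "(+)", OF AB(1,2) asym_cls_add_cong] by simp
  finally show "Phi U (X \<oplus>\<^bsub>asym_ring U\<^esub> Y) = Phi U X \<oplus>\<^bsub>rob_ring U\<^esub> Phi U Y" .
next
  show "Phi U \<one>\<^bsub>asym_ring U\<^esub> = \<one>\<^bsub>rob_ring U\<^esub>"
    by (simp add: Phi_cls moderate_const rob_ring_def star_const_def rob_cls_star_cls)
next
  show "bij_betw (Phi U) (carrier (asym_ring U)) (carrier (rob_ring U))"
    by (simp add: rob_ring_def RobC_eq bij_betw_def inj_on_Phi)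
qed

lemma rob_ring_field: "field (rob_ring U)"
proof -
  have "field (rob_ring U \<lparr>zero := Phi U \<zero>\<^bsub>asym_ring U\<^esub>\<rparr>)"
    by (rule field.ring_iso_imp_img_field[OF asym_ring_field Phi_ring_iso])
  moreover have "Phi U \<zero>\<^bsub>asym_ring U\<^esub> = \<zero>\<^bsub>rob_ring U\<^esub>"
    by (simp add: Phi_cls moderate_const rob_ring_def star_const_def rob_cls_star_cls)
  ultimately show ?thesis by simp
qed


text \<open>\<open>pos_net D\<close> says that the class of the real net \<open>D\<close> is a strictly positive asymptotic number.\<close>

definition pos_net :: "(('a \<Rightarrow> complex) \<Rightarrow> real) \<Rightarrow> bool" where
  "pos_net D \<longleftrightarrow> (\<exists>p. \<forall>\<^sub>F \<phi> in ae_filter. Rphi \<phi> ^ p < D \<phi>)"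

lemma pos_net_imp_eventually_pos: "pos_net D \<Longrightarrow> \<forall>\<^sub>F \<phi> in ae_filter. 0 < D \<phi>"
  unfolding pos_net_def
  by (elim exE, rule eventually_mp[OF _ eventually_Rphi_small], erule eventually_mono)
    (auto intro: less_trans[OF zero_less_power])

lemma pos_net_perturb:
  assumes "pos_net D" "N \<in> negligible U" "\<forall>\<^sub>F \<phi> in ae_filter. \<bar>D' \<phi> - D \<phi>\<bar> \<le> cmod (N \<phi>)"
  shows "pos_net D'"
proof -
  obtain p where "\<forall>\<^sub>F \<phi> in ae_filter. Rphi \<phi> ^ p < D \<phi>" using assms(1) unfolding pos_net_def by blast
  with assms(2)[unfolded negligible_iff, THEN spec[of _ "Suc p"]] assms(3) eventually_Rphi_small
  have "\<forall>\<^sub>F \<phi> in ae_filter. Rphi \<phi> ^ Suc p < D' \<phi>"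
  proof eventually_elim
    case (elim \<phi>)
    then have "Rphi \<phi> ^ Suc p \<le> Rphi \<phi> ^ p / 2" by (simp add: mult_right_mono)
    with elim show ?case by linarith
  qed
  then show ?thesis unfolding pos_net_def by blast
qed

lemma pos_net_not_negligible:
  assumes "pos_net D" "\<forall>\<^sub>F \<phi> in ae_filter. D \<phi> \<le> cmod (C \<phi>)"
  shows "C \<notin> negligible U"
proof
  assume "C \<in> negligible U"
  obtain p where "\<forall>\<^sub>F \<phi> in ae_filter. Rphi \<phi> ^ p < D \<phi>" using assms(1) unfolding pos_net_def by blast
  with assms(2) \<open>C \<in> negligible U\<close>[unfolded negligible_iff, THEN spec[of _ p]]
  have "\<forall>\<^sub>F \<phi> in ae_filter. False" by eventually_elim simp
  then show False by simp
qed

lemma eventually_Im_eq_0: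
  assumes "realnet A"
  shows "\<forall>\<^sub>F \<phi> in ae_filter. Im (A \<phi>) = 0"
proof -
  have "{\<phi> \<in> test_fns. Im (A \<phi>) = 0} = test_fns"
    using assms by (auto simp: realnet_def complex_is_Real_iff)
  then show ?thesis by (simp add: eventually_ae_filter ae_def test_fns_mem)
qed

lemma pos_net_if_not_negligible:
  assumes "A \<notin> negligible U" "realnet A" "\<forall>\<^sub>F \<phi> in ae_filter. 0 < Re (A \<phi>)"
  shows "pos_net (\<lambda>\<phi>. Re (A \<phi>))"
proof -
  obtain p where "\<forall>\<^sub>F \<phi> in ae_filter. Rphi \<phi> ^ p \<le> cmod (A \<phi>)"
    using assms(1) by (rule not_negligible_lower_bound)
  with assms(3) eventually_Im_eq_0[OF assms(2)] eventually_Rphi_small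
  have "\<forall>\<^sub>F \<phi> in ae_filter. Rphi \<phi> ^ Suc p < Re (A \<phi>)"
  proof eventually_elim
    case (elim \<phi>)
    then have "cmod (A \<phi>) = Re (A \<phi>)" by (simp add: cmod_eq_Re)
    moreover have "Rphi \<phi> ^ Suc p < Rphi \<phi> ^ p" using elim by (simp add: power_strict_decreasing)
    ultimately show ?case using elim by linarith
  qed
  then show ?thesis unfolding pos_net_def by blast
qed

lemma asym_pos_cls:
  assumes C: "C \<in> moderate U"
  shows "asym_pos U (asym_cls U C) \<longleftrightarrow>
    (\<lambda>\<phi>. of_real (Im (C \<phi>))) \<in> negligible U \<and> pos_net (\<lambda>\<phi>. Re (C \<phi>))"
proof
  assume "asym_pos U (asym_cls U C)"
  then obtain A where A: "A \<in> asym_cls U C" "realnet A" "\<forall>\<^sub>F \<phi> in ae_filter. 0 < Re (A \<phi>)"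
    and "C \<notin> negligible U"
    by (auto simp: asym_pos_def asym_const_def eventually_ae_filter asym_cls_eq_zero_iff[OF C])
  have CA: "(\<lambda>\<phi>. C \<phi> - A \<phi>) \<in> negligible U" using A(1) by (simp add: mem_asym_cls)
  have "A \<notin> negligible U"
  proof
    assume "A \<in> negligible U"
    with CA have "(\<lambda>\<phi>. (C \<phi> - A \<phi>) + A \<phi>) \<in> negligible U" by (rule negligible_add)
    with \<open>C \<notin> negligible U\<close> show False by simp
  qed
  then have "pos_net (\<lambda>\<phi>. Re (A \<phi>))" using A(2,3) by (rule pos_net_if_not_negligible)
  moreover have "\<forall>\<^sub>F \<phi> in ae_filter. \<bar>Re (C \<phi>) - Re (A \<phi>)\<bar> \<le> cmod (C \<phi> - A \<phi>)"
    by (intro always_eventually allI abs_Re_diff_le_cmod)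
  ultimately have "pos_net (\<lambda>\<phi>. Re (C \<phi>))" by (rule pos_net_perturb[OF _ CA])
  moreover have "\<forall>\<^sub>F \<phi> in ae_filter. cmod (of_real (Im (C \<phi>))) \<le> cmod (C \<phi> - A \<phi>)"
    using eventually_Im_eq_0[OF A(2)]
    by eventually_elim (metis abs_Im_le_cmod minus_complex.sel(2) diff_zero norm_of_real)
  then have "(\<lambda>\<phi>. of_real (Im (C \<phi>))) \<in> negligible U" by (rule negligible_le[OF CA])
  ultimately show "(\<lambda>\<phi>. of_real (Im (C \<phi>))) \<in> negligible U \<and> pos_net (\<lambda>\<phi>. Re (C \<phi>))" by blast
next
  assume Im_C: "(\<lambda>\<phi>. of_real (Im (C \<phi>))) \<in> negligible U \<and> pos_net (\<lambda>\<phi>. Re (C \<phi>))"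
  define D where "D = (\<lambda>\<phi>. complex_of_real (Re (C \<phi>)))"
  have "D \<in> moderate U" unfolding D_def by (rule moderate_le[OF C]) (simp add: abs_Re_le_cmod)
  moreover have "(\<lambda>\<phi>. C \<phi> - D \<phi>) \<in> negligible U"
    by (rule negligible_le[OF conjunct1[OF Im_C]]) (simp add: D_def norm_complex_def)
  ultimately have "D \<in> asym_cls U C" by (simp add: mem_asym_cls)
  moreover have "realnet D" by (simp add: realnet_def D_def)
  moreover have "ae U (\<lambda>\<phi>. 0 < Re (D \<phi>))"
    unfolding D_def eventually_ae_filter[symmetric] using pos_net_imp_eventually_pos Im_C by simp
  moreover have "C \<notin> negligible U"
    by (rule pos_net_not_negligible[OF conjunct2[OF Im_C]]) (simp add: complex_Re_le_cmod)
  ultimately show "asym_pos U (asym_cls U C)"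
    unfolding asym_pos_def asym_const_def asym_cls_eq_zero_iff[OF C] by blast
qed

lemma asym_less_cls:
  assumes "A \<in> moderate U" "B \<in> moderate U"
  shows "asym_less U (asym_cls U A) (asym_cls U B) \<longleftrightarrow>
    (\<lambda>\<phi>. of_real (Im (B \<phi> - A \<phi>))) \<in> negligible U \<and> pos_net (\<lambda>\<phi>. Re (B \<phi>) - Re (A \<phi>))"
  using asym_pos_cls[OF moderate_diff[OF assms(2,1)]]
  by (simp add: asym_less_def asym_minus_cls assms)

lemma asym_less_realnet_cls:
  assumes "A \<in> moderate U" "B \<in> moderate U" "realnet A" "realnet B"
  shows "asym_less U (asym_cls U A) (asym_cls U B) \<longleftrightarrow> pos_net (\<lambda>\<phi>. Re (B \<phi>) - Re (A \<phi>))"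
proof -
  have "\<forall>\<^sub>F \<phi> in ae_filter. of_real (Im (B \<phi> - A \<phi>)) = 0"
    using eventually_Im_eq_0[OF assms(3)] eventually_Im_eq_0[OF assms(4)] by eventually_elim simp
  then show ?thesis
    by (simp add: asym_less_cls assms(1,2) negligible_if_eventually_zero)
qed


section \<open>The valuation\<close>

lemma tendsto_Rphi: "(Rphi \<longlongrightarrow> 0) ae_filter"
  unfolding tendsto_iff dist_real_def
proof (intro allI impI)
  fix e :: real assume "0 < e"
  then have "\<forall>\<^sub>F \<phi> in ae_filter. 0 < Rphi \<phi> \<and> Rphi \<phi> \<le> e / 2" by (intro eventually_Rphi_le) simp
  then show "\<forall>\<^sub>F \<phi> in ae_filter. \<bar>Rphi \<phi> - 0\<bar> < e"
    by (rule eventually_mono) (use \<open>0 < e\<close> in auto)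
qed

lemma tendsto_Rphi_powr: "0 < t \<Longrightarrow> ((\<lambda>\<phi>. Rphi \<phi> powr t) \<longlongrightarrow> 0) ae_filter"
proof (rule tendsto_zero_powrI[OF tendsto_Rphi])
  show "\<forall>\<^sub>F \<phi> in ae_filter. 0 \<le> Rphi \<phi>"
    using eventually_Rphi_small by eventually_elim simp
qed auto

lemma asym_less_abs_const_cls:
  assumes C: "C \<in> moderate U"
  shows "asym_less U (asym_abs U (asym_cls U C)) (asym_const U (of_real c))
    \<longleftrightarrow> pos_net (\<lambda>\<phi>. c - cmod (C \<phi>))"
proof -
  let ?C' = "rep (asym_cls U C)"
  have abs_moderate: "(\<lambda>\<phi>. complex_of_real (cmod (?C' \<phi>))) \<in> moderate U"
    by (rule moderate_le[OF rep_moderate[OF C]]) simp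
  have abs_eq: "asym_abs U (asym_cls U C) = asym_cls U (\<lambda>\<phi>. of_real (cmod (?C' \<phi>)))"
    by (simp add: asym_abs_def norm_complex_def)
  have close: "\<forall>\<^sub>F \<phi> in ae_filter. \<bar>cmod (C \<phi>) - cmod (?C' \<phi>)\<bar> \<le> cmod (?C' \<phi> - C \<phi>)"
    by (intro always_eventually allI) (metis norm_triangle_ineq3 norm_minus_commute)
  then have c: "\<forall>\<^sub>F \<phi> in ae_filter. \<bar>(c - cmod (C \<phi>)) - (c - cmod (?C' \<phi>))\<bar> \<le> cmod (?C' \<phi> - C \<phi>)"
    "\<forall>\<^sub>F \<phi> in ae_filter. \<bar>(c - cmod (?C' \<phi>)) - (c - cmod (C \<phi>))\<bar> \<le> cmod (?C' \<phi> - C \<phi>)"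
    by (simp_all add: abs_minus_commute)
  have "asym_less U (asym_abs U (asym_cls U C)) (asym_const U (of_real c))
      \<longleftrightarrow> pos_net (\<lambda>\<phi>. c - cmod (?C' \<phi>))"
    unfolding abs_eq asym_const_def
    by (subst asym_less_realnet_cls[OF abs_moderate moderate_const]) (auto simp: realnet_def)
  also have "\<dots> \<longleftrightarrow> pos_net (\<lambda>\<phi>. c - cmod (C \<phi>))"
    using pos_net_perturb[OF _ rep_diff_negligible[OF C] c(1)]
      pos_net_perturb[OF _ rep_diff_negligible[OF C] c(2)] by blast
  finally show ?thesis .
qed

lemma pos_net_inverse_nat_iff:
  "(\<forall>n::nat. n \<ge> 1 \<longrightarrow> pos_net (\<lambda>\<phi>. 1 / real n - f \<phi>)) \<longleftrightarrow>
    (\<forall>n::nat. n \<ge> 1 \<longrightarrow> (\<forall>\<^sub>F \<phi> in ae_filter. f \<phi> < 1 / real n))"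
proof (intro iffI allI impI)
  fix n :: nat assume "\<forall>n::nat. n \<ge> 1 \<longrightarrow> pos_net (\<lambda>\<phi>. 1 / real n - f \<phi>)" "n \<ge> 1"
  then show "\<forall>\<^sub>F \<phi> in ae_filter. f \<phi> < 1 / real n"
    by (auto dest!: pos_net_imp_eventually_pos elim!: eventually_mono)
next
  fix n :: nat assume small: "\<forall>n::nat. n \<ge> 1 \<longrightarrow> (\<forall>\<^sub>F \<phi> in ae_filter. f \<phi> < 1 / real n)"
    and "n \<ge> 1"
  have "\<forall>\<^sub>F \<phi> in ae_filter. 0 < Rphi \<phi> \<and> Rphi \<phi> \<le> 1 / real (4 * n)"
    by (rule eventually_Rphi_le) (use \<open>n \<ge> 1\<close> in simp)
  moreover have "\<forall>\<^sub>F \<phi> in ae_filter. f \<phi> < 1 / real (2 * n)"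
    using small \<open>n \<ge> 1\<close> by (auto dest!: spec[of _ "2 * n"])
  ultimately have "\<forall>\<^sub>F \<phi> in ae_filter. Rphi \<phi> ^ 1 < 1 / real n - f \<phi>"
  proof eventually_elim
    case (elim \<phi>)
    have "1 / real (4 * n) < 1 / real (2 * n)" "1 / real n - 1 / real (2 * n) = 1 / real (2 * n)"
      using \<open>n \<ge> 1\<close> by (simp_all add: field_simps)
    with elim show ?case by simp
  qed
  then show "pos_net (\<lambda>\<phi>. 1 / real n - f \<phi>)" unfolding pos_net_def by blast
qed

lemma asym_approx0_cls:
  assumes "C \<in> moderate U"
  shows "asym_approx0 U (asym_cls U C) \<longleftrightarrow> ((\<lambda>\<phi>. cmod (C \<phi>)) \<longlongrightarrow> 0) ae_filter"
  unfolding asym_approx0_def asym_less_abs_const_cls[OF assms] pos_net_inverse_nat_iff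
  by (simp add: tendsto_iff_inverse_nat)

text \<open>\<open>little_o_rho_powr B q\<close> is the condition \<open>B / \<rho>\<^sup>q \<approx> 0\<close> in the definition of the valuation.\<close>

definition little_o_rho_powr :: "'a net \<Rightarrow> real \<Rightarrow> bool" where
  "little_o_rho_powr B q \<longleftrightarrow> ((\<lambda>\<phi>. cmod (B \<phi>) / Rphi \<phi> powr q) \<longlongrightarrow> 0) ae_filter"

lemma little_o_rho_powrI:
  assumes "\<forall>\<^sub>F \<phi> in ae_filter. cmod (B \<phi>) \<le> c * Rphi \<phi> powr t" "q < t"
  shows "little_o_rho_powr B q"
  unfolding little_o_rho_powr_def
proof (rule Lim_null_comparison)
  show "((\<lambda>\<phi>. c * Rphi \<phi> powr (t - q)) \<longlongrightarrow> 0) ae_filter"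
    using assms(2) by (intro tendsto_mult_right_zero tendsto_Rphi_powr) simp
  show "\<forall>\<^sub>F \<phi> in ae_filter. norm (cmod (B \<phi>) / Rphi \<phi> powr q) \<le> c * Rphi \<phi> powr (t - q)"
    using assms(1) eventually_Rphi_small
  proof eventually_elim
    case (elim \<phi>)
    then have "cmod (B \<phi>) / Rphi \<phi> powr q \<le> c * Rphi \<phi> powr t / Rphi \<phi> powr q"
      by (intro divide_right_mono) auto
    then show ?case by (simp add: powr_diff)
  qed
qed

lemma little_o_rho_powr_imp_less:
  assumes "little_o_rho_powr B q"
  shows "\<forall>\<^sub>F \<phi> in ae_filter. cmod (B \<phi>) < Rphi \<phi> powr q"
proof -
  have "\<forall>\<^sub>F \<phi> in ae_filter. cmod (B \<phi>) / Rphi \<phi> powr q < 1"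
    using assms unfolding little_o_rho_powr_def by (rule order_tendstoD) simp
  with eventually_Rphi_small show ?thesis by eventually_elim (simp add: divide_less_eq)
qed

lemma not_little_o_rho_powr:
  assumes "\<forall>\<^sub>F \<phi> in ae_filter. c * Rphi \<phi> powr t \<le> cmod (B \<phi>)" "t < q" "0 < c"
  shows "\<not> little_o_rho_powr B q"
proof
  assume "little_o_rho_powr B q"
  then have "\<forall>\<^sub>F \<phi> in ae_filter. cmod (B \<phi>) / Rphi \<phi> powr q < c"
    unfolding little_o_rho_powr_def using assms(3) by (rule order_tendstoD)
  with assms(1) eventually_Rphi_small have "\<forall>\<^sub>F \<phi> in ae_filter. False"
  proof eventually_elim
    case (elim \<phi>)
    have "1 \<le> Rphi \<phi> powr (t - q)"
      using elim assms(2) powr_mono'[of "t - q" 0 "Rphi \<phi>"] by auto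
    then have "c * 1 \<le> c * Rphi \<phi> powr (t - q)" using assms(3) by (intro mult_left_mono) auto
    also have "\<dots> = c * Rphi \<phi> powr t / Rphi \<phi> powr q" by (simp add: powr_diff)
    also have "\<dots> \<le> cmod (B \<phi>) / Rphi \<phi> powr q" using elim by (intro divide_right_mono) auto
    finally show ?case using elim by simp
  qed
  then show False by simp
qed

lemma little_o_rho_powr_mono:
  assumes "little_o_rho_powr B q" "q' \<le> q"
  shows "little_o_rho_powr B q'"
  unfolding little_o_rho_powr_def
proof (rule Lim_null_comparison)
  show "((\<lambda>\<phi>. cmod (B \<phi>) / Rphi \<phi> powr q) \<longlongrightarrow> 0) ae_filter"
    using assms(1) by (simp add: little_o_rho_powr_def)
  show "\<forall>\<^sub>F \<phi> in ae_filter. norm (cmod (B \<phi>) / Rphi \<phi> powr q') \<le> cmod (B \<phi>) / Rphi \<phi> powr q"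
    using eventually_Rphi_small
  proof eventually_elim
    case (elim \<phi>)
    then have "Rphi \<phi> powr q \<le> Rphi \<phi> powr q'" using assms(2) by (intro powr_mono') auto
    then show ?case using elim by (simp add: divide_left_mono)
  qed
qed

lemma little_o_rho_powr_add:
  assumes "little_o_rho_powr A q" "little_o_rho_powr B q"
  shows "little_o_rho_powr (\<lambda>\<phi>. A \<phi> + B \<phi>) q"
  unfolding little_o_rho_powr_def
proof (rule Lim_null_comparison)
  show "((\<lambda>\<phi>. cmod (A \<phi>) / Rphi \<phi> powr q + cmod (B \<phi>) / Rphi \<phi> powr q) \<longlongrightarrow> 0) ae_filter"
    using tendsto_add[OF assms[unfolded little_o_rho_powr_def]] by simp
  show "\<forall>\<^sub>F \<phi> in ae_filter. norm (cmod (A \<phi> + B \<phi>) / Rphi \<phi> powr q)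
      \<le> cmod (A \<phi>) / Rphi \<phi> powr q + cmod (B \<phi>) / Rphi \<phi> powr q"
    by (intro always_eventually allI)
      (simp add: add_divide_distrib[symmetric] divide_right_mono norm_triangle_ineq)
qed

lemma little_o_rho_powr_uminus: "little_o_rho_powr (\<lambda>\<phi>. - B \<phi>) q \<longleftrightarrow> little_o_rho_powr B q"
  by (simp add: little_o_rho_powr_def)

lemma little_o_rho_powr_negligible:
  assumes "B \<in> negligible U"
  shows "little_o_rho_powr B q"
proof -
  obtain P :: nat where "q < real P" using reals_Archimedean2 by blast
  have "\<forall>\<^sub>F \<phi> in ae_filter. cmod (B \<phi>) < Rphi \<phi> ^ P" using assms by (simp add: negligible_iff)
  with eventually_Rphi_small have "\<forall>\<^sub>F \<phi> in ae_filter. cmod (B \<phi>) \<le> 1 * Rphi \<phi> powr real P"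
    by eventually_elim (simp add: powr_realpow)
  then show ?thesis using \<open>q < real P\<close> by (rule little_o_rho_powrI)
qed

lemma little_o_rho_powr_perturb:
  assumes "little_o_rho_powr B q" "(\<lambda>\<phi>. B' \<phi> - B \<phi>) \<in> negligible U"
  shows "little_o_rho_powr B' q"
  using little_o_rho_powr_add[OF assms(1) little_o_rho_powr_negligible[OF assms(2)]] by simp

lemma moderate_div_Rphi_powr:
  assumes "B \<in> moderate U"
  shows "(\<lambda>\<phi>. B \<phi> / of_real (Rphi \<phi> powr q)) \<in> moderate U"
proof -
  obtain m where m: "\<forall>\<^sub>F \<phi> in ae_filter. cmod (B \<phi>) \<le> inverse (Rphi \<phi> ^ m)"
    using assms unfolding moderate_iff by blast
  define k where "k = nat \<lceil>q\<rceil>"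
  have "q \<le> real k" unfolding k_def by (rule real_nat_ceiling_ge)
  from m eventually_Rphi_small
  have "\<forall>\<^sub>F \<phi> in ae_filter. cmod (B \<phi> / of_real (Rphi \<phi> powr q)) \<le> 1 * inverse (Rphi \<phi> ^ (m + k))"
  proof eventually_elim
    case (elim \<phi>)
    then have R: "0 < Rphi \<phi>" "Rphi \<phi> \<le> 1" by simp_all
    have "Rphi \<phi> ^ k = Rphi \<phi> powr real k" using R(1) by (rule powr_realpow[symmetric])
    also have "\<dots> \<le> Rphi \<phi> powr q" using powr_mono'[OF \<open>q \<le> real k\<close>] R by simp
    finally have inv: "inverse (Rphi \<phi> powr q) \<le> inverse (Rphi \<phi> ^ k)"
      using R(1) by (intro le_imp_inverse_le) simp_all
    have "cmod (B \<phi>) * inverse (Rphi \<phi> powr q) \<le> inverse (Rphi \<phi> ^ m) * inverse (Rphi \<phi> ^ k)"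
      using elim(1) inv by (rule mult_mono') simp_all
    also have "\<dots> = 1 * inverse (Rphi \<phi> ^ (m + k))" by (simp add: power_add)
    finally show ?case using R(1) by (simp add: norm_divide divide_inverse norm_mult norm_inverse)
  qed
  then show ?thesis by (rule moderateI)
qed

lemma asym_val_cls:
  assumes C: "C \<in> moderate U"
  shows "asym_val U (asym_cls U C) = Sup {ereal (real_of_rat q) | q. little_o_rho_powr C (real_of_rat q)}"
proof (cases "C \<in> negligible U")
  case True
  then have "Sup {ereal (real_of_rat q) | q. little_o_rho_powr C (real_of_rat q)} = \<infinity>"
    by (intro ereal_top Sup_rat_ge little_o_rho_powr_negligible)
  with True show ?thesis
    by (simp add: asym_val_def asym_const_def asym_cls_eq_zero_iff[OF C])
next
  case False
  let ?C' = "rep (asym_cls U C)"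
  have "asym_approx0 U (asym_cls U (\<lambda>\<phi>. ?C' \<phi> / of_real (Rphi \<phi> powr q))) \<longleftrightarrow> little_o_rho_powr C q"
    for q
  proof -
    have "asym_approx0 U (asym_cls U (\<lambda>\<phi>. ?C' \<phi> / of_real (Rphi \<phi> powr q))) \<longleftrightarrow>
        little_o_rho_powr ?C' q"
      by (simp add: asym_approx0_cls moderate_div_Rphi_powr rep_moderate C little_o_rho_powr_def
          norm_divide)
    also have "\<dots> \<longleftrightarrow> little_o_rho_powr C q"
      using little_o_rho_powr_perturb rep_diff_negligible[OF C] negligible_diff_commute by blast
    finally show ?thesis .
  qed
  with False show ?thesis
    by (simp add: asym_val_def asym_const_def asym_cls_eq_zero_iff[OF C])
qed

lemma asym_val_greater_imp:
  assumes "C \<in> moderate U" "ereal t < asym_val U (asym_cls U C)"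
  shows "little_o_rho_powr C t"
proof -
  obtain q where "little_o_rho_powr C (real_of_rat q)" "t < real_of_rat q"
    using assms(2) by (auto simp: asym_val_cls[OF assms(1)] less_Sup_iff)
  then show ?thesis by (simp add: little_o_rho_powr_mono)
qed

lemma asym_val_geI:
  assumes "C \<in> moderate U" "\<And>t. ereal t < x \<Longrightarrow> little_o_rho_powr C t"
  shows "x \<le> asym_val U (asym_cls U C)"
proof (rule dense_le)
  fix y assume "y < x"
  show "y \<le> asym_val U (asym_cls U C)"
  proof (cases y)
    case (real t)
    have "ereal t \<le> asym_val U (asym_cls U C)"
      unfolding asym_val_cls[OF assms(1)]
    proof (rule Sup_rat_ge)
      fix q :: rat assume "real_of_rat q < t"
      then have "ereal (real_of_rat q) < ereal t" by simp
      also have "ereal t < x" using real \<open>y < x\<close> by simp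
      finally have "ereal (real_of_rat q) < x" .
      then show "little_o_rho_powr C (real_of_rat q)" by (rule assms(2))
    qed
    then show ?thesis using real by simp
  qed (use \<open>y < x\<close> in simp_all)
qed

lemma asym_val_leI:
  assumes "C \<in> moderate U" "\<forall>\<^sub>F \<phi> in ae_filter. Rphi \<phi> ^ p \<le> cmod (C \<phi>)"
  shows "asym_val U (asym_cls U C) \<le> ereal (real p)"
  unfolding asym_val_cls[OF assms(1)]
proof (rule Sup_least, clarify)
  fix q :: rat assume "little_o_rho_powr C (real_of_rat q)"
  moreover have "\<forall>\<^sub>F \<phi> in ae_filter. 1 * Rphi \<phi> powr real p \<le> cmod (C \<phi>)"
    using assms(2) eventually_Rphi_small by eventually_elim (simp add: powr_realpow)
  ultimately show "ereal (real_of_rat q) \<le> ereal (real p)"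
    using not_little_o_rho_powr[of 1 p C "real_of_rat q"] by force
qed


lemma bounded_ultra_limit:
  fixes L :: "('a \<Rightarrow> complex) \<Rightarrow> real"
  assumes "\<forall>\<^sub>F \<phi> in ae_filter. a \<le> L \<phi> \<and> L \<phi> \<le> b"
  shows "\<exists>r. (L \<longlongrightarrow> r) ae_filter"
proof -
  define S where "S = {s. \<forall>\<^sub>F \<phi> in ae_filter. s < L \<phi>}"
  have "a - 1 \<in> S" unfolding S_def mem_Collect_eq using assms by (rule eventually_mono) simp
  moreover have ub: "s \<le> b" if "s \<in> S" for s
  proof (rule ccontr)
    assume "\<not> s \<le> b"
    from that assms have "\<forall>\<^sub>F \<phi> in ae_filter. False"
      unfolding S_def mem_Collect_eq by eventually_elim (use \<open>\<not> s \<le> b\<close> in simp)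
    then show False by simp
  qed
  ultimately have ne: "S \<noteq> {}" by auto
  have bdd: "bdd_above S" using ub by (rule bdd_aboveI)
  have "(L \<longlongrightarrow> Sup S) ae_filter"
    unfolding tendsto_iff dist_real_def
  proof (intro allI impI)
    fix e :: real assume "0 < e"
    then have "Sup S - e < Sup S" by simp
    then obtain s where s: "s \<in> S" "Sup S - e < s" using less_cSup_iff[OF ne bdd] by blast
    have "Sup S + e / 2 \<notin> S" using cSup_upper[OF _ bdd] \<open>0 < e\<close> by force
    then have "\<forall>\<^sub>F \<phi> in ae_filter. \<not> Sup S + e / 2 < L \<phi>"
      using eventually_ae_filter_or_not unfolding S_def by blast
    with s(1)[unfolded S_def mem_Collect_eq]
    show "\<forall>\<^sub>F \<phi> in ae_filter. \<bar>L \<phi> - Sup S\<bar> < e"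
      by eventually_elim (use s(2) \<open>0 < e\<close> in auto)
  qed
  then show ?thesis by blast
qed

lemma star_st_real_cls:
  assumes "(L \<longlongrightarrow> r) ae_filter"
  shows "star_st U (star_cls U (\<lambda>\<phi>. of_real (L \<phi>))) = r"
proof -
  have "star_less U (star_abs U (star_lift2 U (-) (star_cls U (\<lambda>\<phi>. of_real (L \<phi>)))
        (star_const U (of_real s)))) (star_const U (of_real (1 / real n)))
      \<longleftrightarrow> (\<forall>\<^sub>F \<phi> in ae_filter. \<bar>L \<phi> - s\<bar> < 1 / real n)" for s n
    by (simp add: star_const_def star_abs_cls star_less_cls flip: of_real_diff)
  then have "star_st U (star_cls U (\<lambda>\<phi>. of_real (L \<phi>))) = (THE s. (L \<longlongrightarrow> s) ae_filter)"
    by (simp add: star_st_def tendsto_iff_inverse_nat)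
  also have "\<dots> = r" using assms by (blast intro: tendsto_unique[OF ae_filter_ne_bot])
  finally show ?thesis .
qed

lemma asym_val_eq_log_limit:
  assumes A: "A \<in> moderate U" "A \<notin> negligible U"
    and lim: "((\<lambda>\<phi>. ln (cmod (A \<phi>)) / ln (Rphi \<phi>)) \<longlongrightarrow> r) ae_filter"
  shows "asym_val U (asym_cls U A) = ereal r"
proof -
  obtain p where "\<forall>\<^sub>F \<phi> in ae_filter. Rphi \<phi> ^ p \<le> cmod (A \<phi>)"
    using A(2) by (rule not_negligible_lower_bound)
  with eventually_Rphi_small have pos: "\<forall>\<^sub>F \<phi> in ae_filter. 0 < Rphi \<phi> \<and> Rphi \<phi> < 1 \<and> 0 < cmod (A \<phi>)"
  proof eventually_elim
    case (elim \<phi>)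
    then have "0 < Rphi \<phi> ^ p" by simp
    with elim show ?case by linarith
  qed
  let ?s = "\<lambda>q. (q + r) / 2"
  have "little_o_rho_powr A q" if q: "q < r" for q
  proof (rule little_o_rho_powrI)
    have "\<forall>\<^sub>F \<phi> in ae_filter. ?s q < ln (cmod (A \<phi>)) / ln (Rphi \<phi>)"
      using q by (intro order_tendstoD(1)[OF lim]) (simp add: field_simps)
    with pos show "\<forall>\<^sub>F \<phi> in ae_filter. cmod (A \<phi>) \<le> 1 * Rphi \<phi> powr ?s q"
      by eventually_elim (simp add: powr_less_iff_log_ratio less_imp_le)
  qed (use q in \<open>simp add: field_simps\<close>)
  moreover have "q \<le> r" if "little_o_rho_powr A q" for q
  proof (rule ccontr)
    assume "\<not> q \<le> r"
    have "\<forall>\<^sub>F \<phi> in ae_filter. ln (cmod (A \<phi>)) / ln (Rphi \<phi>) < ?s q"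
      using \<open>\<not> q \<le> r\<close> by (intro order_tendstoD(2)[OF lim]) (simp add: field_simps)
    with pos have "\<forall>\<^sub>F \<phi> in ae_filter. 1 * Rphi \<phi> powr ?s q \<le> cmod (A \<phi>)"
      by eventually_elim (simp add: powr_less_iff_log_ratio less_imp_le)
    then have "\<not> little_o_rho_powr A q"
      by (rule not_little_o_rho_powr) (use \<open>\<not> q \<le> r\<close> in \<open>simp_all add: field_simps\<close>)
    with that show False by simp
  qed
  ultimately show ?thesis
    unfolding asym_val_cls[OF A(1)]
    by (intro antisym Sup_rat_ge Sup_least) auto
qed

lemma log_ratio_converges:
  assumes A: "A \<in> moderate U" "A \<notin> negligible U"
  shows "\<exists>r. ((\<lambda>\<phi>. ln (cmod (A \<phi>)) / ln (Rphi \<phi>)) \<longlongrightarrow> r) ae_filter"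
proof -
  obtain p where p: "\<forall>\<^sub>F \<phi> in ae_filter. Rphi \<phi> ^ p \<le> cmod (A \<phi>)"
    using A(2) by (rule not_negligible_lower_bound)
  obtain m where m: "\<forall>\<^sub>F \<phi> in ae_filter. cmod (A \<phi>) \<le> inverse (Rphi \<phi> ^ m)"
    using A(1) unfolding moderate_iff by blast
  from p m eventually_Rphi_small
  have "\<forall>\<^sub>F \<phi> in ae_filter. - real m \<le> ln (cmod (A \<phi>)) / ln (Rphi \<phi>) \<and>
      ln (cmod (A \<phi>)) / ln (Rphi \<phi>) \<le> real p"
  proof eventually_elim
    case (elim \<phi>)
    then have R: "0 < Rphi \<phi>" "ln (Rphi \<phi>) < 0" and "0 < Rphi \<phi> ^ p" by simp_all
    with elim have A_pos: "0 < cmod (A \<phi>)" by linarith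
    have "real p * ln (Rphi \<phi>) \<le> ln (cmod (A \<phi>))"
      using elim(1) R(1) A_pos by (simp add: ln_realpow[symmetric])
    moreover have "ln (cmod (A \<phi>)) \<le> - (real m * ln (Rphi \<phi>))"
      using elim(2) R(1) A_pos by (simp add: ln_realpow[symmetric] ln_inverse[symmetric])
    ultimately show ?case using R(2) by (simp add: field_simps)
  qed
  then show ?thesis by (rule bounded_ultra_limit)
qed

lemma rob_cls_zero: "rob_cls U (star_const U 0) = Phi U (asym_cls U (\<lambda>_. 0))"
  by (simp add: star_const_def rob_cls_star_cls Phi_cls moderate_const)

lemma rob_val_Phi:
  assumes A: "A \<in> moderate U"
  shows "rob_val U (Phi U (asym_cls U A)) = asym_val U (asym_cls U A)"
proof (cases "A \<in> negligible U")
  case True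
  then have "asym_cls U A = asym_cls U (\<lambda>_. 0)" using asym_cls_eq_zero_iff[OF A] by simp
  then show ?thesis by (simp add: rob_val_def asym_val_def rob_cls_zero asym_const_def)
next
  case False
  have nonzero: "Phi U (asym_cls U A) \<noteq> rob_cls U (star_const U 0)"
  proof
    assume "Phi U (asym_cls U A) = rob_cls U (star_const U 0)"
    then have "star_cls U ` asym_cls U A = star_cls U ` asym_cls U (\<lambda>_. 0)"
      by (simp add: rob_cls_zero Phi_cls A moderate_const)
    then have "asym_cls U A = asym_cls U (\<lambda>_. 0)" by (rule Phi_cls_inject[OF A moderate_const])
    with False A show False by (simp add: asym_cls_eq_zero_iff)
  qed
  obtain A' where A': "A' \<in> asym_cls U A" "rep (star_cls U ` asym_cls U A) = star_cls U A'"
    using A by (rule rep_Phi_cls)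
  then have eq: "asym_cls U A' = asym_cls U A" and "A' \<in> moderate U"
    by (simp_all add: asym_cls_eq_if_mem mem_asym_cls)
  with False have "A' \<notin> negligible U" by (simp add: asym_cls_eq_zero_iff[symmetric] A)
  then obtain r where lim: "((\<lambda>\<phi>. ln (cmod (A' \<phi>)) / ln (Rphi \<phi>)) \<longlongrightarrow> r) ae_filter"
    using log_ratio_converges \<open>A' \<in> moderate U\<close> by blast
  have "rob_val U (Phi U (asym_cls U A))
      = ereal (star_st U (star_cls U (\<lambda>\<phi>. of_real (ln (cmod (A' \<phi>)) / ln (Rphi \<phi>)))))"
    using nonzero A'(2) A
    by (simp add: rob_val_def Phi_cls star_ln_def star_abs_cls star_rho_def)
  also have "\<dots> = ereal r" using star_st_real_cls[OF lim] by simp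
  also have "\<dots> = asym_val U (asym_cls U A)"
    using asym_val_eq_log_limit[OF \<open>A' \<in> moderate U\<close> \<open>A' \<notin> negligible U\<close> lim] eq by simp
  finally show ?thesis .
qed


lemma rob_norm_Phi: "A \<in> moderate U \<Longrightarrow> rob_norm U (Phi U (asym_cls U A)) = asym_norm U (asym_cls U A)"
  by (simp add: rob_norm_def asym_norm_def rob_val_Phi)

lemma rob_dist_Phi:
  assumes "A \<in> moderate U" "B \<in> moderate U"
  shows "rob_dist U (Phi U (asym_cls U A)) (Phi U (asym_cls U B)) = asym_dist U (asym_cls U A) (asym_cls U B)"
proof -
  have "rob_minus U (Phi U (asym_cls U A)) (Phi U (asym_cls U B)) = Phi U (asym_cls U (\<lambda>\<phi>. A \<phi> - B \<phi>))"
    using rob_cls_lift2[where f = "(-)", OF assms asym_cls_diff_cong]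
    by (simp add: rob_minus_def Phi_cls assms moderate_diff)
  then show ?thesis
    by (simp add: rob_dist_def asym_dist_def asym_minus_cls assms rob_norm_Phi moderate_diff)
qed

section \<open>The metric topology\<close>

lemma asym_val_uminus:
  assumes "C \<in> moderate U"
  shows "asym_val U (asym_cls U (\<lambda>\<phi>. - C \<phi>)) = asym_val U (asym_cls U C)"
  using assms by (simp add: asym_val_cls moderate_uminus little_o_rho_powr_uminus)

lemma asym_val_add_ge:
  assumes "A \<in> moderate U" "B \<in> moderate U"
  shows "min (asym_val U (asym_cls U A)) (asym_val U (asym_cls U B)) \<le> asym_val U (asym_cls U (\<lambda>\<phi>. A \<phi> + B \<phi>))"
  using assms
  by (intro asym_val_geI moderate_add little_o_rho_powr_add) (auto intro: asym_val_greater_imp)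

lemma asym_val_not_minf:
  assumes "C \<in> moderate U"
  shows "asym_val U (asym_cls U C) \<noteq> -\<infinity>"
proof -
  obtain m where m: "\<forall>\<^sub>F \<phi> in ae_filter. cmod (C \<phi>) \<le> inverse (Rphi \<phi> ^ m)"
    using assms unfolding moderate_iff by blast
  with eventually_Rphi_small
  have bound: "\<forall>\<^sub>F \<phi> in ae_filter. cmod (C \<phi>) \<le> 1 * Rphi \<phi> powr (- real m)"
    by eventually_elim (simp add: powr_minus powr_realpow)
  have "ereal (- real m - 1) \<le> asym_val U (asym_cls U C)"
  proof (rule asym_val_geI[OF assms])
    fix t assume "ereal t < ereal (- real m - 1)"
    then have "t < - real m" by simp
    then show "little_o_rho_powr C t" by (rule little_o_rho_powrI[OF bound])
  qed
  then show ?thesis by auto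
qed

lemma asym_val_eq_infinity_iff:
  assumes "C \<in> moderate U"
  shows "asym_val U (asym_cls U C) = \<infinity> \<longleftrightarrow> C \<in> negligible U"
proof
  assume val: "asym_val U (asym_cls U C) = \<infinity>"
  show "C \<in> negligible U"
  proof (rule ccontr)
    assume "C \<notin> negligible U"
    then obtain p where "\<forall>\<^sub>F \<phi> in ae_filter. Rphi \<phi> ^ p \<le> cmod (C \<phi>)"
      by (rule not_negligible_lower_bound)
    with val show False using asym_val_leI[OF assms] by simp
  qed
next
  assume "C \<in> negligible U"
  then show "asym_val U (asym_cls U C) = \<infinity>"
    by (simp add: asym_val_def asym_const_def asym_cls_eq_zero_iff[OF assms])
qed

lemma asym_dist_rep: "asym_dist U X Y = unorm (asym_val U (asym_cls U (\<lambda>\<phi>. rep X \<phi> - rep Y \<phi>)))"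
  by (simp add: asym_dist_def asym_norm_def asym_minus_def)

lemma asym_metric_space: "Metric_space (AsymC U) (asym_dist U)"
proof
  fix X Y show "0 \<le> asym_dist U X Y" by (simp add: asym_dist_rep unorm_nonneg)
  show "asym_dist U X Y = asym_dist U Y X"
  proof (cases "(\<lambda>\<phi>. rep X \<phi> - rep Y \<phi>) \<in> moderate U")
    case True
    then show ?thesis
      using asym_val_uminus[OF True] by (simp add: asym_dist_rep)
  next
    case False
    then have "(\<lambda>\<phi>. rep Y \<phi> - rep X \<phi>) \<notin> moderate U"
      using moderate_uminus by fastforce
    with False show ?thesis by (simp add: asym_dist_rep asym_cls_empty)
  qed
next
  fix X Y assume XY: "X \<in> AsymC U" "Y \<in> AsymC U"
  then have "rep X \<in> moderate U" "rep Y \<in> moderate U" "X = asym_cls U (rep X)" "Y = asym_cls U (rep Y)"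
    using AsymC_rep by blast+
  then have "asym_dist U X Y = 0 \<longleftrightarrow> (\<lambda>\<phi>. rep X \<phi> - rep Y \<phi>) \<in> negligible U"
    by (simp add: asym_dist_rep unorm_eq_0_iff asym_val_eq_infinity_iff moderate_diff)
  also have "\<dots> \<longleftrightarrow> X = Y"
    using asym_cls_eq_iff[OF \<open>rep X \<in> moderate U\<close> \<open>rep Y \<in> moderate U\<close>]
      \<open>X = asym_cls U (rep X)\<close> \<open>Y = asym_cls U (rep Y)\<close> by simp
  finally show "asym_dist U X Y = 0 \<longleftrightarrow> X = Y" .
next
  fix X Y Z assume "X \<in> AsymC U" "Y \<in> AsymC U" "Z \<in> AsymC U"
  then have m: "rep X \<in> moderate U" "rep Y \<in> moderate U" "rep Z \<in> moderate U"
    using AsymC_rep by blast+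
  let ?v = "\<lambda>A B. asym_val U (asym_cls U (\<lambda>\<phi>. rep A \<phi> - rep B \<phi>))"
  have "min (?v X Y) (?v Y Z) \<le> ?v X Z"
    using asym_val_add_ge[OF moderate_diff[OF m(1,2)] moderate_diff[OF m(2,3)]] by simp
  moreover have "min (?v X Y) (?v Y Z) \<noteq> -\<infinity>"
    using asym_val_not_minf moderate_diff m by (simp add: min_def)
  ultimately have "unorm (?v X Z) \<le> unorm (min (?v X Y) (?v Y Z))" by (rule unorm_antimono)
  also have "\<dots> \<le> unorm (?v X Y) + unorm (?v Y Z)"
    using unorm_nonneg[of "?v X Y"] unorm_nonneg[of "?v Y Z"] by (simp add: min_def)
  finally show "asym_dist U X Z \<le> asym_dist U X Y + asym_dist U Y Z" by (simp add: asym_dist_rep)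
qed


sublocale asym_metric: Metric_space "AsymC U" "asym_dist U"
  by (rule asym_metric_space)

definition box :: "'a net set \<Rightarrow> nat \<Rightarrow> 'a net set set" where
  "box Z n = {W \<in> AsymC U. \<forall>\<^sub>F \<phi> in ae_filter. cmod (rep W \<phi> - rep Z \<phi>) < Rphi \<phi> ^ n}"

definition box_open :: "'a net set set \<Rightarrow> bool" where
  "box_open S \<longleftrightarrow> S \<subseteq> AsymC U \<and> (\<forall>Z\<in>S. \<exists>n. box Z n \<subseteq> S)"

lemma asym_val_greater_nat_imp:
  assumes "C \<in> moderate U" "ereal (real n) < asym_val U (asym_cls U C)"
  shows "\<forall>\<^sub>F \<phi> in ae_filter. cmod (C \<phi>) < Rphi \<phi> ^ n"
  using little_o_rho_powr_imp_less[OF asym_val_greater_imp[OF assms]] eventually_Rphi_small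
  by eventually_elim (simp add: powr_realpow)

lemma asym_val_ge_natI:
  assumes "C \<in> moderate U" "\<forall>\<^sub>F \<phi> in ae_filter. cmod (C \<phi>) \<le> Rphi \<phi> ^ n"
  shows "ereal (real n) \<le> asym_val U (asym_cls U C)"
proof (rule asym_val_geI[OF assms(1)])
  have bound: "\<forall>\<^sub>F \<phi> in ae_filter. cmod (C \<phi>) \<le> 1 * Rphi \<phi> powr real n"
    using assms(2) eventually_Rphi_small by eventually_elim (simp add: powr_realpow)
  show "little_o_rho_powr C t" if "ereal t < ereal (real n)" for t
    by (rule little_o_rho_powrI[OF bound]) (use that in simp)
qed

lemma mball_subset_box:
  assumes "Z \<in> AsymC U"
  shows "asym_metric.mball Z (exp (- real n)) \<subseteq> box Z n"
proof
  fix W assume "W \<in> asym_metric.mball Z (exp (- real n))"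
  then have W: "W \<in> AsymC U" and d: "asym_dist U Z W < exp (- real n)" by auto
  have C: "(\<lambda>\<phi>. rep Z \<phi> - rep W \<phi>) \<in> moderate U"
    using AsymC_rep[OF assms] AsymC_rep[OF W] by (intro moderate_diff) auto
  then have "ereal (real n) < asym_val U (asym_cls U (\<lambda>\<phi>. rep Z \<phi> - rep W \<phi>))"
    using d by (simp add: asym_dist_rep unorm_less_exp_iff asym_val_not_minf)
  then have "\<forall>\<^sub>F \<phi> in ae_filter. cmod (rep Z \<phi> - rep W \<phi>) < Rphi \<phi> ^ n"
    by (rule asym_val_greater_nat_imp[OF C])
  with W show "W \<in> box Z n" by (simp add: box_def norm_minus_commute)
qed

lemma box_subset_mball:
  assumes "Z \<in> AsymC U" "exp (- real n) < r"
  shows "box Z n \<subseteq> asym_metric.mball Z r"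
proof
  fix W assume "W \<in> box Z n"
  then have W: "W \<in> AsymC U" and b: "\<forall>\<^sub>F \<phi> in ae_filter. cmod (rep Z \<phi> - rep W \<phi>) \<le> Rphi \<phi> ^ n"
    by (auto simp: box_def norm_minus_commute elim: eventually_mono)
  have C: "(\<lambda>\<phi>. rep Z \<phi> - rep W \<phi>) \<in> moderate U"
    using AsymC_rep[OF assms(1)] AsymC_rep[OF W] by (intro moderate_diff) auto
  have "asym_dist U Z W \<le> unorm (ereal (real n))"
    unfolding asym_dist_rep by (rule unorm_antimono[OF asym_val_ge_natI[OF C b]]) simp
  also have "\<dots> < r" using assms(2) by (simp add: unorm_def)
  finally show "W \<in> asym_metric.mball Z r" using assms(1) W by simp
qed

lemma openin_metric_top_C_iff: "openin (metric_top_C U) S \<longleftrightarrow> box_open S"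
proof -
  have small: "\<exists>n. exp (- real n) < r" if "0 < r" for r :: real
  proof -
    obtain n :: nat where "- ln r < real n" using reals_Archimedean2 by blast
    then have "exp (- real n) < exp (ln r)" by simp
    with that show ?thesis by auto
  qed
  show ?thesis
    unfolding metric_top_C_def asym_metric.openin_mtopology box_open_def
    using mball_subset_box box_subset_mball small
    by (meson exp_gt_zero subset_trans subsetD)
qed


section \<open>The order topology\<close>

lemma eventually_norm_triangle3:
  fixes a b c d :: "('a \<Rightarrow> complex) \<Rightarrow> 'b::real_normed_vector"
  assumes "\<forall>\<^sub>F \<phi> in ae_filter. norm (a \<phi> - b \<phi>) < Rphi \<phi> ^ Suc (Suc k)"
    and "\<forall>\<^sub>F \<phi> in ae_filter. norm (b \<phi> - c \<phi>) < Rphi \<phi> ^ Suc (Suc k)"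
    and "\<forall>\<^sub>F \<phi> in ae_filter. norm (c \<phi> - d \<phi>) < Rphi \<phi> ^ Suc (Suc k)"
  shows "\<forall>\<^sub>F \<phi> in ae_filter. norm (a \<phi> - d \<phi>) < Rphi \<phi> ^ k"
  using assms eventually_Rphi_small
proof eventually_elim
  case (elim \<phi>)
  have "Rphi \<phi> * Rphi \<phi> \<le> (1 / 2) * (1 / 2)" using elim(4) by (intro mult_mono) auto
  have "3 * Rphi \<phi> ^ Suc (Suc k) = (3 * (Rphi \<phi> * Rphi \<phi>)) * Rphi \<phi> ^ k" by (simp add: algebra_simps)
  also have "\<dots> \<le> (3 / 4) * Rphi \<phi> ^ k"
    using \<open>Rphi \<phi> * Rphi \<phi> \<le> (1 / 2) * (1 / 2)\<close> elim(4) by (intro mult_right_mono) auto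
  also have "\<dots> < Rphi \<phi> ^ k" using elim(4) by simp
  finally have "3 * Rphi \<phi> ^ Suc (Suc k) < Rphi \<phi> ^ k" .
  moreover have "norm (a \<phi> - d \<phi>) \<le> norm (a \<phi> - b \<phi>) + norm (b \<phi> - c \<phi>) + norm (c \<phi> - d \<phi>)"
    by (metis add.commute norm_diff_triangle_le order_refl)
  ultimately show ?case using elim(1-3) by linarith
qed

lemma AsymR_subset_AsymC: "AsymR U \<subseteq> AsymC U"
  unfolding AsymR_def AsymC_def by auto

lemma AsymR_rep:
  assumes "a \<in> AsymR U"
  shows "rep a \<in> moderate U" "a = asym_cls U (rep a)" "(\<lambda>\<phi>. of_real (Im (rep a \<phi>))) \<in> negligible U"
proof -
  obtain A where A: "A \<in> moderate U" "realnet A" "a = asym_cls U A"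
    using assms unfolding AsymR_def by blast
  then show "rep a \<in> moderate U" "a = asym_cls U (rep a)" by (simp_all add: rep_moderate asym_cls_rep)
  have "\<forall>\<^sub>F \<phi> in ae_filter. cmod (of_real (Im (rep a \<phi>))) \<le> cmod (rep a \<phi> - A \<phi>)"
    using eventually_Im_eq_0[OF A(2)]
    by eventually_elim (metis abs_Im_le_cmod minus_complex.sel(2) diff_zero norm_of_real)
  with rep_diff_negligible[OF A(1)] A(3)
  show "(\<lambda>\<phi>. of_real (Im (rep a \<phi>))) \<in> negligible U" by (simp add: negligible_le)
qed

lemma asym_less_AsymR:
  assumes "a \<in> AsymR U" "x \<in> AsymR U"
  shows "asym_less U a x \<longleftrightarrow> pos_net (\<lambda>\<phi>. Re (rep x \<phi>) - Re (rep a \<phi>))"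
proof -
  have "(\<lambda>\<phi>. of_real (Im (rep x \<phi> - rep a \<phi>))) \<in> negligible U"
    by (rule negligible_le_add[OF AsymR_rep(3)[OF assms(2)] AsymR_rep(3)[OF assms(1)]])
      (simp add: abs_triangle_ineq4 flip: of_real_diff)
  then show ?thesis
    using asym_less_cls[OF AsymR_rep(1)[OF assms(1)] AsymR_rep(1)[OF assms(2)]]
      AsymR_rep(2)[OF assms(1)] AsymR_rep(2)[OF assms(2)] by simp
qed

definition rbox :: "'a net set \<Rightarrow> nat \<Rightarrow> 'a net set set" where
  "rbox a n = {x \<in> AsymR U. \<forall>\<^sub>F \<phi> in ae_filter. \<bar>Re (rep x \<phi>) - Re (rep a \<phi>)\<bar> < Rphi \<phi> ^ n}"

lemma rbox_antimono:
  assumes "m \<le> n"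
  shows "rbox a n \<subseteq> rbox a m"
proof
  fix x assume "x \<in> rbox a n"
  then have "x \<in> AsymR U" and "\<forall>\<^sub>F \<phi> in ae_filter. \<bar>Re (rep x \<phi>) - Re (rep a \<phi>)\<bar> < Rphi \<phi> ^ n"
    by (simp_all add: rbox_def)
  moreover from this(2) eventually_Rphi_small
  have "\<forall>\<^sub>F \<phi> in ae_filter. \<bar>Re (rep x \<phi>) - Re (rep a \<phi>)\<bar> < Rphi \<phi> ^ m"
  proof eventually_elim
    case (elim \<phi>)
    then have "Rphi \<phi> ^ n \<le> Rphi \<phi> ^ m" using assms by (intro power_decreasing) auto
    with elim show ?case by linarith
  qed
  ultimately show "x \<in> rbox a m" by (simp add: rbox_def)
qed

lemma pos_net_stable:
  assumes "pos_net D"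
  obtains n where "\<And>E. \<forall>\<^sub>F \<phi> in ae_filter. \<bar>E \<phi> - D \<phi>\<bar> < Rphi \<phi> ^ n \<Longrightarrow> pos_net E"
proof -
  obtain p where p: "\<forall>\<^sub>F \<phi> in ae_filter. Rphi \<phi> ^ p < D \<phi>" using assms unfolding pos_net_def by blast
  have "pos_net E" if "\<forall>\<^sub>F \<phi> in ae_filter. \<bar>E \<phi> - D \<phi>\<bar> < Rphi \<phi> ^ Suc p" for E
  proof -
    from p that eventually_Rphi_small have "\<forall>\<^sub>F \<phi> in ae_filter. Rphi \<phi> ^ Suc p < E \<phi>"
    proof eventually_elim
      case (elim \<phi>)
      then have "Rphi \<phi> ^ Suc p \<le> Rphi \<phi> ^ p / 2" by (simp add: mult_right_mono)
      with elim show ?case by linarith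
    qed
    then show ?thesis unfolding pos_net_def by blast
  qed
  then show ?thesis by (rule that)
qed

lemma rbox_subset_ray_above:
  assumes "a \<in> AsymR U" "x \<in> AsymR U" "asym_less U a x"
  obtains n where "rbox x n \<subseteq> {y \<in> AsymR U. asym_less U a y}"
proof -
  obtain n where n: "\<And>E. \<forall>\<^sub>F \<phi> in ae_filter. \<bar>E \<phi> - (Re (rep x \<phi>) - Re (rep a \<phi>))\<bar> < Rphi \<phi> ^ n \<Longrightarrow> pos_net E"
    using pos_net_stable assms(3)[unfolded asym_less_AsymR[OF assms(1,2)]] by blast
  have "rbox x n \<subseteq> {y \<in> AsymR U. asym_less U a y}"
    using assms(1) by (auto simp: rbox_def asym_less_AsymR intro!: n)
  then show ?thesis by (rule that)
qed

lemma rbox_subset_ray_below: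
  assumes "b \<in> AsymR U" "x \<in> AsymR U" "asym_less U x b"
  obtains n where "rbox x n \<subseteq> {y \<in> AsymR U. asym_less U y b}"
proof -
  obtain n where n: "\<And>E. \<forall>\<^sub>F \<phi> in ae_filter. \<bar>E \<phi> - (Re (rep b \<phi>) - Re (rep x \<phi>))\<bar> < Rphi \<phi> ^ n \<Longrightarrow> pos_net E"
    using pos_net_stable assms(3)[unfolded asym_less_AsymR[OF assms(2,1)]] by blast
  have "rbox x n \<subseteq> {y \<in> AsymR U. asym_less U y b}"
    using assms(1) by (auto simp: rbox_def asym_less_AsymR abs_minus_commute intro!: n)
  then show ?thesis by (rule that)
qed

lemma openin_ord_top_R_imp_rbox:
  assumes "openin (ord_top_R U) W"
  shows "W \<subseteq> AsymR U \<and> (\<forall>x\<in>W. \<exists>n. rbox x n \<subseteq> W)"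
  using assms unfolding ord_top_R_def openin_topology_generated_by_iff
proof (induction rule: generate_topology_on.induct)
  case (Int V W)
  show ?case
  proof (intro conjI ballI)
    show "V \<inter> W \<subseteq> AsymR U" using Int by blast
    fix x assume "x \<in> V \<inter> W"
    with Int obtain m n where "rbox x m \<subseteq> V" "rbox x n \<subseteq> W" by blast
    then have "rbox x (max m n) \<subseteq> V \<inter> W"
      using rbox_antimono[of m "max m n" x] rbox_antimono[of n "max m n" x] by auto
    then show "\<exists>n. rbox x n \<subseteq> V \<inter> W" by blast
  qed
next
  case (UN K)
  then show ?case by blast
next
  case (Basis W)
  then consider (above) a where "a \<in> AsymR U" "W = {x \<in> AsymR U. asym_less U a x}"
    | (below) b where "b \<in> AsymR U" "W = {x \<in> AsymR U. asym_less U x b}"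
    by blast
  then show ?case
  proof cases
    case above
    then show ?thesis by (auto elim!: rbox_subset_ray_above[of a])
  next
    case below
    then show ?thesis by (auto elim!: rbox_subset_ray_below[of b])
  qed
qed simp


lemma asym_re_AsymR:
  assumes "Z \<in> AsymC U"
  shows "asym_re U Z \<in> AsymR U"
    and "\<forall>\<^sub>F \<phi> in ae_filter. \<bar>Re (rep (asym_re U Z) \<phi>) - Re (rep Z \<phi>)\<bar> < Rphi \<phi> ^ k"
proof -
  have m: "(\<lambda>\<phi>. complex_of_real (Re (rep Z \<phi>))) \<in> moderate U"
    by (rule moderate_le[OF AsymC_rep[OF assms, THEN conjunct1]]) (simp add: abs_Re_le_cmod)
  then show "asym_re U Z \<in> AsymR U" by (auto simp: asym_re_def AsymR_def realnet_def)
  have "\<forall>\<^sub>F \<phi> in ae_filter. cmod (rep (asym_re U Z) \<phi> - of_real (Re (rep Z \<phi>))) < Rphi \<phi> ^ k"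
    using rep_diff_negligible[OF m] by (simp add: asym_re_def negligible_iff)
  then show "\<forall>\<^sub>F \<phi> in ae_filter. \<bar>Re (rep (asym_re U Z) \<phi>) - Re (rep Z \<phi>)\<bar> < Rphi \<phi> ^ k"
  proof (rule eventually_mono)
    fix \<phi> assume "cmod (rep (asym_re U Z) \<phi> - of_real (Re (rep Z \<phi>))) < Rphi \<phi> ^ k"
    moreover have "\<bar>Re (rep (asym_re U Z) \<phi>) - Re (rep Z \<phi>)\<bar> \<le> cmod (rep (asym_re U Z) \<phi> - of_real (Re (rep Z \<phi>)))"
      using abs_Re_diff_le_cmod[of "rep (asym_re U Z) \<phi>" "of_real (Re (rep Z \<phi>))"] by simp
    ultimately show "\<bar>Re (rep (asym_re U Z) \<phi>) - Re (rep Z \<phi>)\<bar> < Rphi \<phi> ^ k" by linarith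
  qed
qed

lemma asym_im_AsymR:
  assumes "Z \<in> AsymC U"
  shows "asym_im U Z \<in> AsymR U"
    and "\<forall>\<^sub>F \<phi> in ae_filter. \<bar>Re (rep (asym_im U Z) \<phi>) - Im (rep Z \<phi>)\<bar> < Rphi \<phi> ^ k"
proof -
  have m: "(\<lambda>\<phi>. complex_of_real (Im (rep Z \<phi>))) \<in> moderate U"
    by (rule moderate_le[OF AsymC_rep[OF assms, THEN conjunct1]]) (simp add: abs_Im_le_cmod)
  then show "asym_im U Z \<in> AsymR U" by (auto simp: asym_im_def AsymR_def realnet_def)
  have "\<forall>\<^sub>F \<phi> in ae_filter. cmod (rep (asym_im U Z) \<phi> - of_real (Im (rep Z \<phi>))) < Rphi \<phi> ^ k"
    using rep_diff_negligible[OF m] by (simp add: asym_im_def negligible_iff)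
  then show "\<forall>\<^sub>F \<phi> in ae_filter. \<bar>Re (rep (asym_im U Z) \<phi>) - Im (rep Z \<phi>)\<bar> < Rphi \<phi> ^ k"
  proof (rule eventually_mono)
    fix \<phi> assume "cmod (rep (asym_im U Z) \<phi> - of_real (Im (rep Z \<phi>))) < Rphi \<phi> ^ k"
    moreover have "\<bar>Re (rep (asym_im U Z) \<phi>) - Im (rep Z \<phi>)\<bar> \<le> cmod (rep (asym_im U Z) \<phi> - of_real (Im (rep Z \<phi>)))"
      using abs_Re_diff_le_cmod[of "rep (asym_im U Z) \<phi>" "of_real (Im (rep Z \<phi>))"] by simp
    ultimately show "\<bar>Re (rep (asym_im U Z) \<phi>) - Im (rep Z \<phi>)\<bar> < Rphi \<phi> ^ k" by linarith
  qed
qed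

lemma box_subset_rbox_re:
  assumes "Z \<in> AsymC U" "W \<in> box Z (Suc (Suc n))"
  shows "asym_re U W \<in> rbox (asym_re U Z) n"
proof -
  have W: "W \<in> AsymC U" and b: "\<forall>\<^sub>F \<phi> in ae_filter. cmod (rep W \<phi> - rep Z \<phi>) < Rphi \<phi> ^ Suc (Suc n)"
    using assms(2) by (simp_all add: box_def)
  have "\<forall>\<^sub>F \<phi> in ae_filter. \<bar>Re (rep W \<phi>) - Re (rep Z \<phi>)\<bar> < Rphi \<phi> ^ Suc (Suc n)"
    using b
  proof (rule eventually_mono)
    fix \<phi> assume "cmod (rep W \<phi> - rep Z \<phi>) < Rphi \<phi> ^ Suc (Suc n)"
    then show "\<bar>Re (rep W \<phi>) - Re (rep Z \<phi>)\<bar> < Rphi \<phi> ^ Suc (Suc n)"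
      using abs_Re_diff_le_cmod[of "rep W \<phi>" "rep Z \<phi>"] by linarith
  qed
  moreover have "\<forall>\<^sub>F \<phi> in ae_filter. \<bar>Re (rep Z \<phi>) - Re (rep (asym_re U Z) \<phi>)\<bar> < Rphi \<phi> ^ Suc (Suc n)"
    using asym_re_AsymR(2)[OF assms(1)] by (rule eventually_mono) (simp only: abs_minus_commute)
  ultimately have "\<forall>\<^sub>F \<phi> in ae_filter. \<bar>Re (rep (asym_re U W) \<phi>) - Re (rep (asym_re U Z) \<phi>)\<bar> < Rphi \<phi> ^ n"
    by (rule eventually_norm_triangle3[where 'b = real, unfolded real_norm_def, OF asym_re_AsymR(2)[OF W]])
  then show ?thesis using asym_re_AsymR(1)[OF W] by (simp add: rbox_def)
qed

lemma box_subset_rbox_im: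
  assumes "Z \<in> AsymC U" "W \<in> box Z (Suc (Suc n))"
  shows "asym_im U W \<in> rbox (asym_im U Z) n"
proof -
  have W: "W \<in> AsymC U" and b: "\<forall>\<^sub>F \<phi> in ae_filter. cmod (rep W \<phi> - rep Z \<phi>) < Rphi \<phi> ^ Suc (Suc n)"
    using assms(2) by (simp_all add: box_def)
  have "\<forall>\<^sub>F \<phi> in ae_filter. \<bar>Im (rep W \<phi>) - Im (rep Z \<phi>)\<bar> < Rphi \<phi> ^ Suc (Suc n)"
    using b
  proof (rule eventually_mono)
    fix \<phi> assume "cmod (rep W \<phi> - rep Z \<phi>) < Rphi \<phi> ^ Suc (Suc n)"
    then show "\<bar>Im (rep W \<phi>) - Im (rep Z \<phi>)\<bar> < Rphi \<phi> ^ Suc (Suc n)"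
      using abs_Im_diff_le_cmod[of "rep W \<phi>" "rep Z \<phi>"] by linarith
  qed
  moreover have "\<forall>\<^sub>F \<phi> in ae_filter. \<bar>Im (rep Z \<phi>) - Re (rep (asym_im U Z) \<phi>)\<bar> < Rphi \<phi> ^ Suc (Suc n)"
    using asym_im_AsymR(2)[OF assms(1)] by (rule eventually_mono) (simp only: abs_minus_commute)
  ultimately have "\<forall>\<^sub>F \<phi> in ae_filter. \<bar>Re (rep (asym_im U W) \<phi>) - Re (rep (asym_im U Z) \<phi>)\<bar> < Rphi \<phi> ^ n"
    by (rule eventually_norm_triangle3[where 'b = real, unfolded real_norm_def, OF asym_im_AsymR(2)[OF W]])
  then show ?thesis using asym_im_AsymR(1)[OF W] by (simp add: rbox_def)
qed

lemma openin_ord_top_C_imp_box_open: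
  assumes "openin (ord_top_C U) S"
  shows "box_open S"
proof -
  have "\<exists>V. openin (prod_topology (ord_top_R U) (ord_top_R U)) V \<and>
      S = (\<lambda>z. (asym_re U z, asym_im U z)) -` V \<inter> AsymC U"
    using assms unfolding ord_top_C_def openin_pullback_topology .
  then obtain V where V: "openin (prod_topology (ord_top_R U) (ord_top_R U)) V"
    and S: "S = (\<lambda>z. (asym_re U z, asym_im U z)) -` V \<inter> AsymC U"
    by (elim exE conjE)
  have "\<exists>n. box Z n \<subseteq> S" if "Z \<in> S" for Z
  proof -
    have Z: "Z \<in> AsymC U" "(asym_re U Z, asym_im U Z) \<in> V" using that unfolding S by simp_all
    from V[unfolded openin_prod_topology_alt, rule_format, OF Z(2)]
    obtain V1 V2 where V12: "openin (ord_top_R U) V1" "openin (ord_top_R U) V2"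
      "asym_re U Z \<in> V1" "asym_im U Z \<in> V2" "V1 \<times> V2 \<subseteq> V"
      by (elim exE conjE)
    obtain n1 where n1: "rbox (asym_re U Z) n1 \<subseteq> V1"
      using openin_ord_top_R_imp_rbox[OF V12(1)] V12(3) by blast
    obtain n2 where n2: "rbox (asym_im U Z) n2 \<subseteq> V2"
      using openin_ord_top_R_imp_rbox[OF V12(2)] V12(4) by blast
    have "box Z (Suc (Suc (max n1 n2))) \<subseteq> S"
    proof
      fix W assume W: "W \<in> box Z (Suc (Suc (max n1 n2)))"
      have "asym_re U W \<in> V1"
        using box_subset_rbox_re[OF Z(1) W] rbox_antimono[OF max.cobounded1[of n1 n2]] n1 by blast
      moreover have "asym_im U W \<in> V2"
        using box_subset_rbox_im[OF Z(1) W] rbox_antimono[OF max.cobounded2[of n2 n1]] n2 by blast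
      ultimately have "(asym_re U W, asym_im U W) \<in> V" using V12(5) by blast
      moreover have "W \<in> AsymC U" using W by (simp add: box_def)
      ultimately show "W \<in> S" unfolding S by simp
    qed
    then show ?thesis by blast
  qed
  moreover have "S \<subseteq> AsymC U" unfolding S by blast
  ultimately show ?thesis by (simp add: box_open_def)
qed


definition mk_complex :: "'a net set \<Rightarrow> 'a net set \<Rightarrow> 'a net" where
  "mk_complex a b = (\<lambda>\<phi>. of_real (Re (rep a \<phi>)) + \<i> * of_real (Re (rep b \<phi>)))"

lemma mk_complex_moderate:
  assumes "a \<in> AsymR U" "b \<in> AsymR U"
  shows "mk_complex a b \<in> moderate U"
proof (rule moderate_le_add[OF AsymR_rep(1)[OF assms(1)] AsymR_rep(1)[OF assms(2)]])
  show "\<forall>\<^sub>F \<phi> in ae_filter. cmod (mk_complex a b \<phi>) \<le> cmod (rep a \<phi>) + cmod (rep b \<phi>)"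
    unfolding mk_complex_def
    by (intro always_eventually allI order.trans[OF cmod_complex_le] add_mono abs_Re_le_cmod)
qed

lemma mk_complex_diff_bound:
  "cmod (mk_complex a' b' \<phi> - mk_complex a b \<phi>)
    \<le> \<bar>Re (rep a' \<phi>) - Re (rep a \<phi>)\<bar> + \<bar>Re (rep b' \<phi>) - Re (rep b \<phi>)\<bar>"
proof -
  have "mk_complex a' b' \<phi> - mk_complex a b \<phi> =
      of_real (Re (rep a' \<phi>) - Re (rep a \<phi>)) + \<i> * of_real (Re (rep b' \<phi>) - Re (rep b \<phi>))"
    by (simp add: mk_complex_def algebra_simps)
  then show ?thesis by (simp only: cmod_complex_le)
qed

lemma asym_cls_mk_complex_re_im:
  assumes "Z \<in> AsymC U"
  shows "asym_cls U (mk_complex (asym_re U Z) (asym_im U Z)) = Z"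
proof -
  have "(\<lambda>\<phi>. mk_complex (asym_re U Z) (asym_im U Z) \<phi> - rep Z \<phi>) \<in> negligible U"
  proof (rule negligibleI)
    fix p
    have "\<forall>\<^sub>F \<phi> in ae_filter. cmod (mk_complex (asym_re U Z) (asym_im U Z) \<phi> - rep Z \<phi>) \<le> 2 * Rphi \<phi> ^ Suc p"
      using asym_re_AsymR(2)[OF assms, of "Suc p"] asym_im_AsymR(2)[OF assms, of "Suc p"]
    proof eventually_elim
      case (elim \<phi>)
      have "mk_complex (asym_re U Z) (asym_im U Z) \<phi> - rep Z \<phi> =
          of_real (Re (rep (asym_re U Z) \<phi>) - Re (rep Z \<phi>)) +
          \<i> * of_real (Re (rep (asym_im U Z) \<phi>) - Im (rep Z \<phi>))"
        by (simp add: mk_complex_def complex_eq_iff)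
      with cmod_complex_le elim show ?case by (smt (verit))
    qed
    then show "\<exists>C. \<forall>\<^sub>F \<phi> in ae_filter. cmod (mk_complex (asym_re U Z) (asym_im U Z) \<phi> - rep Z \<phi>) \<le> C * Rphi \<phi> ^ Suc p"
      by blast
  qed
  then show ?thesis using AsymC_rep[OF assms] by (metis asym_cls_eqI)
qed

definition shift :: "'a net set \<Rightarrow> real \<Rightarrow> nat \<Rightarrow> 'a net set" where
  "shift a s k = asym_cls U (\<lambda>\<phi>. of_real (Re (rep a \<phi>) + s * Rphi \<phi> ^ k))"

lemma shift_moderate:
  assumes "a \<in> AsymR U"
  shows "(\<lambda>\<phi>. complex_of_real (Re (rep a \<phi>) + s * Rphi \<phi> ^ k)) \<in> moderate U"
proof (rule moderate_le_add[OF AsymR_rep(1)[OF assms] moderate_const[of "of_real \<bar>s\<bar>"]])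
  show "\<forall>\<^sub>F \<phi> in ae_filter. cmod (of_real (Re (rep a \<phi>) + s * Rphi \<phi> ^ k)) \<le> cmod (rep a \<phi>) + cmod (of_real \<bar>s\<bar>)"
    using eventually_Rphi_small
  proof eventually_elim
    case (elim \<phi>)
    have "\<bar>s * Rphi \<phi> ^ k\<bar> \<le> \<bar>s\<bar>"
      using elim by (simp add: abs_mult mult_left_le power_le_one)
    moreover have "cmod (complex_of_real (Re (rep a \<phi>) + s * Rphi \<phi> ^ k)) = \<bar>Re (rep a \<phi>) + s * Rphi \<phi> ^ k\<bar>"
      "cmod (complex_of_real \<bar>s\<bar>) = \<bar>s\<bar>"
      by (rule norm_of_real, simp)
    ultimately show ?case
      using abs_Re_le_cmod[of "rep a \<phi>"] abs_triangle_ineq[of "Re (rep a \<phi>)" "s * Rphi \<phi> ^ k"]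
      by linarith
  qed
qed

lemma shift_AsymR:
  assumes "a \<in> AsymR U"
  shows "shift a s k \<in> AsymR U"
  unfolding shift_def AsymR_def using shift_moderate[OF assms]
  by (intro imageI IntI) (simp_all add: realnet_def)

lemma shift_rep:
  assumes "a \<in> AsymR U"
  shows "\<forall>\<^sub>F \<phi> in ae_filter. \<bar>Re (rep (shift a s k) \<phi>) - (Re (rep a \<phi>) + s * Rphi \<phi> ^ k)\<bar> < Rphi \<phi> ^ j"
proof -
  have "\<forall>\<^sub>F \<phi> in ae_filter. cmod (rep (shift a s k) \<phi> - of_real (Re (rep a \<phi>) + s * Rphi \<phi> ^ k)) < Rphi \<phi> ^ j"
    using rep_diff_negligible[OF shift_moderate[OF assms, of s k]] unfolding negligible_iff shift_def by blast
  then show ?thesis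
    by (rule eventually_mono) (rule le_less_trans[OF abs_Re_sub_real_le])
qed

definition ival :: "'a net set \<Rightarrow> nat \<Rightarrow> 'a net set set" where
  "ival a k = {x \<in> AsymR U. asym_less U (shift a (- 1) k) x} \<inter> {x \<in> AsymR U. asym_less U x (shift a 1 k)}"

lemma ival_open: "a \<in> AsymR U \<Longrightarrow> openin (ord_top_R U) (ival a k)"
  unfolding ord_top_R_def openin_topology_generated_by_iff ival_def
  by (intro generate_topology_on.Int generate_topology_on.Basis) (auto intro: shift_AsymR)

lemma ival_mem:
  assumes a: "a \<in> AsymR U"
  shows "a \<in> ival a k"
proof -
  have "\<forall>\<^sub>F \<phi> in ae_filter. Rphi \<phi> ^ Suc k < Rphi \<phi> ^ k"
    using eventually_Rphi_small by eventually_elim (simp add: power_strict_decreasing)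
  then have "pos_net (\<lambda>\<phi>. Rphi \<phi> ^ k)" unfolding pos_net_def by blast
  then obtain n where n: "\<And>E. \<forall>\<^sub>F \<phi> in ae_filter. \<bar>E \<phi> - Rphi \<phi> ^ k\<bar> < Rphi \<phi> ^ n \<Longrightarrow> pos_net E"
    using pos_net_stable by blast
  have "pos_net (\<lambda>\<phi>. Re (rep a \<phi>) - Re (rep (shift a (- 1) k) \<phi>))"
    using shift_rep[OF a, of "- 1" k n] by (intro n) (simp add: abs_minus_commute algebra_simps)
  moreover have "pos_net (\<lambda>\<phi>. Re (rep (shift a 1 k) \<phi>) - Re (rep a \<phi>))"
    using shift_rep[OF a, of 1 k n] by (intro n) (simp add: algebra_simps)
  ultimately show ?thesis
    using a by (simp add: ival_def asym_less_AsymR shift_AsymR)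
qed

lemma ival_close:
  assumes a: "a \<in> AsymR U" and x: "x \<in> ival a k"
  shows "\<forall>\<^sub>F \<phi> in ae_filter. \<bar>Re (rep x \<phi>) - Re (rep a \<phi>)\<bar> < 2 * Rphi \<phi> ^ k"
proof -
  have "x \<in> AsymR U" using x by (simp add: ival_def)
  then have "pos_net (\<lambda>\<phi>. Re (rep x \<phi>) - Re (rep (shift a (- 1) k) \<phi>))"
    "pos_net (\<lambda>\<phi>. Re (rep (shift a 1 k) \<phi>) - Re (rep x \<phi>))"
    using x by (simp_all add: ival_def asym_less_AsymR shift_AsymR a)
  then have "\<forall>\<^sub>F \<phi> in ae_filter. 0 < Re (rep x \<phi>) - Re (rep (shift a (- 1) k) \<phi>)"
    "\<forall>\<^sub>F \<phi> in ae_filter. 0 < Re (rep (shift a 1 k) \<phi>) - Re (rep x \<phi>)"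
    by (auto dest: pos_net_imp_eventually_pos)
  with shift_rep[OF a, of "- 1" k k] shift_rep[OF a, of 1 k k]
  show ?thesis by eventually_elim (simp add: abs_less_iff; linarith)
qed


lemma mk_complex_ival_in_box:
  assumes a: "a \<in> AsymR U" and b: "b \<in> AsymR U"
    and a': "a' \<in> ival a (n + 4)" and b': "b' \<in> ival b (n + 4)"
  shows "asym_cls U (mk_complex a' b') \<in> box (asym_cls U (mk_complex a b)) n"
proof -
  have a'R: "a' \<in> AsymR U" and b'R: "b' \<in> AsymR U" using a' b' by (simp_all add: ival_def)
  let ?M = "mk_complex a b" and ?M' = "mk_complex a' b'"
  have t1: "\<forall>\<^sub>F \<phi> in ae_filter. norm (rep (asym_cls U ?M') \<phi> - ?M' \<phi>) < Rphi \<phi> ^ Suc (Suc n)"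
    using rep_diff_negligible[OF mk_complex_moderate[OF a'R b'R]] unfolding negligible_iff by blast
  have t2: "\<forall>\<^sub>F \<phi> in ae_filter. norm (?M' \<phi> - ?M \<phi>) < Rphi \<phi> ^ Suc (Suc n)"
    using ival_close[OF a a'] ival_close[OF b b'] eventually_Rphi_small
  proof eventually_elim
    case (elim \<phi>)
    have "4 * (Rphi \<phi> * Rphi \<phi>) \<le> 4 * ((1 / 2) * (1 / 2))" using elim(3) by (intro mult_left_mono mult_mono) auto
    have "4 * Rphi \<phi> ^ (n + 4) = (4 * (Rphi \<phi> * Rphi \<phi>)) * Rphi \<phi> ^ Suc (Suc n)"
      by (simp add: numeral_eq_Suc algebra_simps)
    also have "\<dots> \<le> 1 * Rphi \<phi> ^ Suc (Suc n)"
      using \<open>4 * (Rphi \<phi> * Rphi \<phi>) \<le> 4 * ((1 / 2) * (1 / 2))\<close> elim(3)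
      by (intro mult_right_mono) simp_all
    finally have "4 * Rphi \<phi> ^ (n + 4) \<le> Rphi \<phi> ^ Suc (Suc n)" by simp
    with elim mk_complex_diff_bound[of a' b' \<phi> a b] show ?case by simp
  qed
  have t3: "\<forall>\<^sub>F \<phi> in ae_filter. norm (?M \<phi> - rep (asym_cls U ?M) \<phi>) < Rphi \<phi> ^ Suc (Suc n)"
    using negligible_diff_commute[OF rep_diff_negligible[OF mk_complex_moderate[OF a b]]]
    unfolding negligible_iff by blast
  have "\<forall>\<^sub>F \<phi> in ae_filter. norm (rep (asym_cls U ?M') \<phi> - rep (asym_cls U ?M) \<phi>) < Rphi \<phi> ^ n"
    using t1 t2 t3 by (rule eventually_norm_triangle3)
  then show ?thesis by (simp add: box_def AsymC_I mk_complex_moderate a'R b'R)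
qed

lemma box_open_imp_openin_ord_top_C:
  assumes S: "box_open S"
  shows "openin (ord_top_C U) S"
  unfolding ord_top_C_def openin_pullback_topology
proof (intro exI conjI)
  let ?V = "{(a, b). a \<in> AsymR U \<and> b \<in> AsymR U \<and> asym_cls U (mk_complex a b) \<in> S}"
  have SC: "S \<subseteq> AsymC U" using S by (simp add: box_open_def)
  show "S = (\<lambda>z. (asym_re U z, asym_im U z)) -` ?V \<inter> AsymC U"
    using SC asym_re_AsymR(1) asym_im_AsymR(1) asym_cls_mk_complex_re_im by auto
  show "openin (prod_topology (ord_top_R U) (ord_top_R U)) ?V"
    unfolding openin_prod_topology_alt
  proof (intro allI impI)
    fix a b assume "(a, b) \<in> ?V"
    then have a: "a \<in> AsymR U" and b: "b \<in> AsymR U" and Z: "asym_cls U (mk_complex a b) \<in> S" by auto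
    then obtain n where n: "box (asym_cls U (mk_complex a b)) n \<subseteq> S"
      using S by (auto simp: box_open_def)
    have "ival a (n + 4) \<times> ival b (n + 4) \<subseteq> ?V"
      using mk_complex_ival_in_box[OF a b] n by (auto simp: ival_def)
    then show "\<exists>V1 V2. openin (ord_top_R U) V1 \<and> openin (ord_top_R U) V2 \<and> a \<in> V1 \<and> b \<in> V2 \<and> V1 \<times> V2 \<subseteq> ?V"
      using a b by (intro exI[of _ "ival a (n + 4)"] exI[of _ "ival b (n + 4)"] conjI ival_open ival_mem)
  qed
qed

lemma ord_top_C_eq_metric_top_C: "ord_top_C U = metric_top_C U"
  unfolding topology_eq openin_metric_top_C_iff
  using openin_ord_top_C_imp_box_open box_open_imp_openin_ord_top_C by blast

end

theorem theorem7p4: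
  fixes U :: "('a::euclidean_space \<Rightarrow> complex) set set"
  assumes free: "free_ultrafilter_on test_fns U"
    and Dn_in: "\<And>n::nat. n \<ge> 1 \<Longrightarrow> Dn n \<in> U"
    and good: "cplus_good U"
  shows
    "(\<forall>A::'a net. A \<in> moderate U \<longleftrightarrow> star_cls U A \<in> M_rho U)
     \<and> ((\<forall>A\<in>moderate U. \<forall>B\<in>moderate U.
            asym_cls U A = asym_cls U B \<longrightarrow> rob_cls U (star_cls U A) = rob_cls U (star_cls U B))
        \<and> field (asym_ring U) \<and> field (rob_ring U)
        \<and> Phi U \<in> ring_iso (asym_ring U) (rob_ring U)
        \<and> bij_betw (Phi U) (AsymR U) (RobR U)
        \<and> (\<forall>X\<in>AsymC U. rob_val U (Phi U X) = asym_val U X)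
        \<and> (\<forall>X\<in>AsymC U. rob_norm U (Phi U X) = asym_norm U X)
        \<and> (\<forall>X\<in>AsymC U. \<forall>Y\<in>AsymC U. rob_dist U (Phi U X) (Phi U Y) = asym_dist U X Y))
     \<and> ord_top_C U = metric_top_C U"
proof -
  interpret asymptotic_numbers U
    using free Dn_in by unfold_locales (simp add: free_ultrafilter_on_def)
  have "bij_betw (Phi U) (AsymR U) (RobR U)"
    unfolding bij_betw_def RobR_eq using inj_on_subset[OF inj_on_Phi AsymR_subset_AsymC] by blast
  then show ?thesis
    using M_rho_iff rob_cls_star_cls asym_ring_field rob_ring_field Phi_ring_iso ord_top_C_eq_metric_top_C
    by (auto elim!: AsymC_cases simp: rob_val_Phi rob_norm_Phi rob_dist_Phi)
qed

end
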